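(* Let $m\ge 1$ be an integer. Then \[ \sum_{\lambda \vdash m} x^{v(\lambda)}\,y^{v(\lambda')}\,q^{d(\lambda)}\,t^{d(\lambda')}\,I_\lambda=(x+y)^{\lfloor m/2\rfloor}, \] as polynomials in the indeterminates $x,y,q,t$.
   Context: Partitions are identified with their Young diagrams; $\lambda'$ denotes the conjugate partition and $l(\lambda)$ the number of nonzero parts. Define $v(\lambda)=\sum_{i=1}^{l(\lambda)}\lfloor \lambda_i/2\rfloor$ and $d(\lambda)=\sum_{i=1}^{\lfloor l(\lambda)/2\rfloor}\lfloor \lambda_{2i}/2\rfloor$ (one has $d(\lambda)=d(\lambda')$). For a standard Young tableau $T$ of shape $\lambda\vdash m$, its reading word is obtained by reading the entries of the first (top) row from left to right, then the second row from left to right, and so on; this is a permutation of $[m]$, and $\mathrm{sign}(T)$ is the sign of this permutation. The sign-imbalance of $\lambda$ is $I_\lambda=\sum_T \mathrm{sign}(T)$, the sum over all standard Young tableaux $T$ of shape $\lambda$. *)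

theory Defs
  imports Main "HOL-Combinatorics.Permutations"
begin

text \<open>A partition is represented as the list of its nonzero parts, in weakly decreasing order.
  Rows and columns of Young diagrams are 0-indexed; cell (i,j) = row i, column j.\<close>

definition is_partition :: "nat list \<Rightarrow> bool" where
  "is_partition lam \<longleftrightarrow> sorted_wrt (\<ge>) lam \<and> (\<forall>p\<in>set lam. 0 < p)"

definition partitions :: "nat \<Rightarrow> nat list set" where
  "partitions m = {lam. is_partition lam \<and> sum_list lam = m}"

definition conj_part :: "nat list \<Rightarrow> nat list" where
  "conj_part lam = map (\<lambda>j. length (filter (\<lambda>p. j < p) lam)) [0..<(if lam = [] then 0 else hd lam)]"

definition v_stat :: "nat list \<Rightarrow> nat" where
  "v_stat lam = (\<Sum>i<length lam. lam ! i div 2)"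

text \<open>d(lam) = sum over i = 1..floor(l/2) of floor(lam_{2i}/2); lam_{2i} (1-indexed) is lam ! (2i-1).\<close>
definition d_stat :: "nat list \<Rightarrow> nat" where
  "d_stat lam = (\<Sum>i\<in>{1..length lam div 2}. lam ! (2 * i - 1) div 2)"

definition cells :: "nat list \<Rightarrow> (nat \<times> nat) set" where
  "cells lam = {(i, j). i < length lam \<and> j < lam ! i}"

definition SYT :: "nat list \<Rightarrow> (nat \<times> nat \<Rightarrow> nat) set" where
  "SYT lam = {T. bij_betw T (cells lam) {1..sum_list lam}
     \<and> (\<forall>c. c \<notin> cells lam \<longrightarrow> T c = 0)
     \<and> (\<forall>i j. (i, Suc j) \<in> cells lam \<longrightarrow> T (i, j) < T (i, Suc j))
     \<and> (\<forall>i j. (Suc i, j) \<in> cells lam \<longrightarrow> T (i, j) < T (Suc i, j))}"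

definition reading_word :: "nat list \<Rightarrow> (nat \<times> nat \<Rightarrow> nat) \<Rightarrow> nat list" where
  "reading_word lam T = concat (map (\<lambda>i. map (\<lambda>j. T (i, j)) [0..<lam ! i]) [0..<length lam])"

definition word_perm :: "nat list \<Rightarrow> nat \<Rightarrow> nat" where
  "word_perm w = (\<lambda>k. if 1 \<le> k \<and> k \<le> length w then w ! (k - 1) else k)"

definition tableau_sign :: "nat list \<Rightarrow> (nat \<times> nat \<Rightarrow> nat) \<Rightarrow> int" where
  "tableau_sign lam T = sign (word_perm (reading_word lam T))"

definition sign_imbalance :: "nat list \<Rightarrow> int" where
  "sign_imbalance lam = (\<Sum>T\<in>SYT lam. tableau_sign lam T)"

end

theory Submission
  imports Defs
begin

text \<open>Removing the largest entry of a standard Young tableau, which sits at the end of a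
  removable row \<open>r\<close>, gives the recursion \<open>I(\<lambda>) = \<Sum>\<^sub>r \<epsilon>\<^sub>r I(\<lambda> - r)\<close>, where \<open>\<epsilon>\<^sub>r\<close> is \<open>-1\<close> to
  the number of cells below row \<open>r\<close>. By induction it yields a dual identity for adding a cell:
  for \<open>\<mu> \<turnstile> n\<close>, \<open>\<Sum>\<^sub>i (-1)\<^sup>i \<epsilon>\<^sub>i I(\<mu> + i)\<close> is \<open>I(\<mu>)\<close> if \<open>n\<close> is even and \<open>0\<close> if \<open>n\<close> is odd. Indeed, in
  the double sum obtained from the recursion, adding and removing in different rows cancel in
  pairs, and the diagonal terms are governed by the alternation of addable and removable rows.

  The monomial \<open>x\<^bsup>v(\<lambda>)\<^esup> y\<^bsup>v(\<lambda>')\<^esup> q\<^bsup>d(\<lambda>)\<^esup> t\<^bsup>d(\<lambda>')\<^esup>\<close> is a product of factors depending on single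
  rows. Applying the recursion twice writes the weighted sum \<open>F(n + 2)\<close> as a sum over \<open>\<mu> \<turnstile> n\<close>
  of \<open>I(\<mu>)\<close> times a signed sum over the ways of adding two cells to \<open>\<mu>\<close>. Additions in two
  different rows cancel in pairs, leaving dominoes; a local computation shows that the domino
  terms equal \<open>x + y\<close> times the weight of \<open>\<mu>\<close> plus \<open>\<kappa>\<close> times a signed sum over the ways of
  removing two cells, and the latter contributes nothing by the addition identity. Hence
  \<open>F(n + 2) = (x + y) F(n)\<close>, with \<open>F(0) = F(1) = 1\<close>.\<close>

lemma sum_fun_upd:
  assumes "finite A" "i \<in> A"
  shows "sum (p(i := a)) A + p i = sum p A + (a::nat)"
proof -
  have "sum (p(i := a)) A = a + sum (p(i := a)) (A - {i})"
    using assms by (simp add: sum.remove)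
  also have "sum (p(i := a)) (A - {i}) = sum p (A - {i})"
    by (rule sum.cong) auto
  finally show ?thesis
    using assms by (simp add: sum.remove)
qed

lemma antimono_mult_le_sum:
  fixes f :: "nat \<Rightarrow> nat"
  assumes "antimono f"
  shows "Suc n * f n \<le> (\<Sum>i<Suc n. f i)"
proof -
  have "(\<Sum>i<Suc n. f n) \<le> (\<Sum>i<Suc n. f i)"
    using assms by (intro sum_mono) (auto simp: antimono_def)
  then show ?thesis
    by simp
qed

lemma sum_square_split_diagonal:
  "(\<Sum>i<(K::nat). \<Sum>j<K. f i j)
 = (\<Sum>i<K. f i i) + (\<Sum>i<K. \<Sum>j<K. if j = i then 0 else (f i j :: 'a::comm_monoid_add))"
proof -
  have "(\<Sum>j<K. f i j) = f i i + (\<Sum>j<K. if j = i then 0 else f i j)" if "i < K" for i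
  proof -
    have "(\<Sum>j<K. f i j) = (\<Sum>j<K. (if j = i then f i j else 0) + (if j = i then 0 else f i j))"
      by (intro sum.cong) auto
    then show ?thesis
      using that by (simp add: sum.distrib)
  qed
  then show ?thesis
    by (simp add: sum.distrib)
qed

lemma sum_square_antisymmetric:
  assumes "\<And>i j. i < K \<Longrightarrow> j < K \<Longrightarrow> Z i j = - Z j i" "\<And>i. i < K \<Longrightarrow> Z i i = 0"
  shows "(\<Sum>i<(K::nat). \<Sum>j<K. Z i j) = (0::'a::ab_group_add)"
  using assms
proof (induction K)
  case (Suc K)
  have "(\<Sum>i<K. \<Sum>j<K. Z i j) = 0"
    by (rule Suc.IH) (meson Suc.prems less_SucI)+
  moreover have "(\<Sum>i<K. Z i K) + (\<Sum>j<K. Z K j) = 0"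
    using Suc.prems(1)[of _ K] by (simp add: sum.distrib[symmetric])
  moreover have "(\<Sum>i<Suc K. \<Sum>j<Suc K. Z i j)
      = (\<Sum>i<K. \<Sum>j<K. Z i j) + ((\<Sum>i<K. Z i K) + (\<Sum>j<K. Z K j)) + Z K K"
    by (simp add: sum.distrib add_ac)
  ultimately show ?case
    using Suc.prems(2)[of K] by simp
qed simp

lemma sum_square_transpose_diagonal:
  assumes "\<And>i j. i < K \<Longrightarrow> j < K \<Longrightarrow> i \<noteq> j \<Longrightarrow> X i j = - Y j i"
  shows "(\<Sum>i<(K::nat). \<Sum>j<K. X i j) + (\<Sum>j<K. \<Sum>i<K. Y j i)
       = (\<Sum>i<K. X i i) + (\<Sum>i<K. (Y i i :: 'a::ab_group_add))"
proof -
  have "(\<Sum>i<K. \<Sum>j<K. if j = i then 0 else X i j) = (\<Sum>i<K. \<Sum>j<K. - (if i = j then 0 else Y j i))"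
    by (intro sum.cong refl) (auto simp: assms)
  also have "\<dots> = - (\<Sum>j<K. \<Sum>i<K. if i = j then 0 else Y j i)"
    by (subst sum.swap) (simp only: sum_negf)
  finally show ?thesis
    using sum_square_split_diagonal[of X K] sum_square_split_diagonal[of Y K] by simp
qed

section \<open>Partitions as antitone functions\<close>

text \<open>A partition of \<open>n\<close> is the antitone function sending \<open>i\<close> to the length of row \<open>i\<close>
  (rows 0-indexed); \<open>p n = 0\<close> bounds the number of rows.\<close>

definition fpartitions :: "nat \<Rightarrow> (nat \<Rightarrow> nat) set" where
  "fpartitions n = {p. antimono p \<and> p n = 0 \<and> (\<Sum>i<n. p i) = n}"

definition addable :: "(nat \<Rightarrow> nat) \<Rightarrow> nat \<Rightarrow> bool" where
  "addable p i \<longleftrightarrow> i = 0 \<or> p i < p (i - 1)"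

definition removable :: "(nat \<Rightarrow> nat) \<Rightarrow> nat \<Rightarrow> bool" where
  "removable p i \<longleftrightarrow> p (Suc i) < p i"

definition add_cell :: "(nat \<Rightarrow> nat) \<Rightarrow> nat \<Rightarrow> nat \<Rightarrow> nat" where
  "add_cell p i = p(i := Suc (p i))"

definition remove_cell :: "(nat \<Rightarrow> nat) \<Rightarrow> nat \<Rightarrow> nat \<Rightarrow> nat" where
  "remove_cell p i = p(i := p i - 1)"

text \<open>Moving the last entry of row \<open>i\<close> to the end of the reading word of rows \<open>0..<K\<close>
  passes the cells strictly below row \<open>i\<close>; this is the sign of that move.\<close>

definition sign_below :: "nat \<Rightarrow> (nat \<Rightarrow> nat) \<Rightarrow> nat \<Rightarrow> int" where
  "sign_below K p i = (-1) ^ (\<Sum>j = Suc i..<K. p j)"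

lemma fpartitionsD:
  assumes "p \<in> fpartitions n"
  shows "antimono p" "p n = 0" "(\<Sum>i<n. p i) = n"
  using assms unfolding fpartitions_def by auto

lemma fpartitions_antimono: "p \<in> fpartitions n \<Longrightarrow> i \<le> j \<Longrightarrow> p j \<le> p i"
  using fpartitionsD(1) by (auto simp: antimono_def)

lemma fpartitions_Suc_le: "p \<in> fpartitions n \<Longrightarrow> p (Suc i) \<le> p i"
  by (simp add: fpartitions_antimono)

lemma fpartitions_zero: "p \<in> fpartitions n \<Longrightarrow> n \<le> i \<Longrightarrow> p i = 0"
  using fpartitions_antimono[of p n n i] fpartitionsD(2)[of p n] by simp

lemma fpartitions_pos: "p \<in> fpartitions n \<Longrightarrow> 0 < p i \<Longrightarrow> i < n"
  using fpartitions_zero[of p n i] by (cases "n \<le> i") auto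

lemma fpartitions_sum:
  assumes p: "p \<in> fpartitions n" and "n \<le> N"
  shows "(\<Sum>i<N. p i) = n"
proof -
  have "(\<Sum>i<N. p i) = (\<Sum>i<n. p i) + (\<Sum>i = n..<N. p i)"
    using \<open>n \<le> N\<close> by (metis sum.atLeastLessThan_concat lessThan_atLeast0 zero_le)
  then show ?thesis
    using fpartitionsD(3)[OF p] fpartitions_zero[OF p] by simp
qed

lemma fpartitions_le:
  assumes p: "p \<in> fpartitions n"
  shows "p i \<le> n"
proof (cases "i < n")
  case True
  then have "p i \<le> (\<Sum>j<n. p j)"
    by (intro member_le_sum) auto
  then show ?thesis
    using fpartitionsD(3)[OF p] by simp
qed (simp add: fpartitions_zero[OF p])

lemma finite_fpartitions: "finite (fpartitions n)"
proof -
  have "inj_on (\<lambda>p. map p [0..<n]) (fpartitions n)"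
  proof (rule inj_onI)
    fix p q assume p: "p \<in> fpartitions n" and q: "q \<in> fpartitions n"
      and eq: "map p [0..<n] = map q [0..<n]"
    show "p = q"
    proof
      fix i
      show "p i = q i"
        using eq fpartitions_zero[OF p, of i] fpartitions_zero[OF q, of i] map_eq_conv[of p]
        by (cases "i < n") auto
    qed
  qed
  moreover have "(\<lambda>p. map p [0..<n]) ` fpartitions n \<subseteq> {xs. set xs \<subseteq> {..n} \<and> length xs = n}"
    using fpartitions_le by fastforce
  then have "finite ((\<lambda>p. map p [0..<n]) ` fpartitions n)"
    by (rule finite_subset) (rule finite_lists_length_eq, simp)
  ultimately show ?thesis
    using finite_imageD by blast
qed

lemma fpartitions_0: "fpartitions 0 = {\<lambda>_. 0}"
  using fpartitions_zero[of _ 0] by (auto simp: fpartitions_def antimono_def)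

lemma remove_cell_fpartitions:
  assumes p: "p \<in> fpartitions (Suc n)" and r: "removable p r"
  shows "remove_cell p r \<in> fpartitions n"
proof -
  let ?q = "remove_cell p r"
  have "0 < p r"
    using r by (simp add: removable_def)
  then have "r < Suc n"
    by (rule fpartitions_pos[OF p])
  have mono: "antimono ?q"
    unfolding antimono_iff_le_Suc
    using fpartitions_Suc_le[OF p] r
    by (fastforce simp: remove_cell_def removable_def intro: le_trans[OF diff_le_self])
  have sum: "(\<Sum>i<Suc n. ?q i) = n"
    using sum_fun_upd[of "{..<Suc n}" r p "p r - 1"] \<open>0 < p r\<close> \<open>r < Suc n\<close> fpartitionsD(3)[OF p]
    by (simp add: remove_cell_def)
  then have "Suc n * ?q n \<le> n"
    using antimono_mult_le_sum[OF mono, of n] by simp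
  then have "?q n = 0"
    by (cases "?q n") auto
  with sum mono show ?thesis
    by (simp add: fpartitions_def)
qed

lemma addable_le: "p \<in> fpartitions n \<Longrightarrow> addable p i \<Longrightarrow> i \<le> n"
  unfolding addable_def using fpartitions_pos[of p n "i - 1"] by (cases i) auto

lemma add_cell_fpartitions:
  assumes p: "p \<in> fpartitions n" and a: "addable p i"
  shows "add_cell p i \<in> fpartitions (Suc n)"
proof -
  have "i \<le> n"
    using addable_le[OF p a] .
  have "antimono (add_cell p i)"
    unfolding antimono_iff_le_Suc
    using fpartitions_Suc_le[OF p] a by (auto simp: add_cell_def addable_def le_Suc_eq)
  moreover have "add_cell p i (Suc n) = 0"
    using \<open>i \<le> n\<close> fpartitions_zero[OF p] by (simp add: add_cell_def)
  moreover have "(\<Sum>j<Suc n. add_cell p i j) = Suc n"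
    using sum_fun_upd[of "{..<Suc n}" i p "Suc (p i)"] \<open>i \<le> n\<close> fpartitions_sum[OF p, of "Suc n"]
    by (simp add: add_cell_def)
  ultimately show ?thesis
    by (simp add: fpartitions_def)
qed

lemma removable_add_cell: "p \<in> fpartitions n \<Longrightarrow> removable (add_cell p i) i"
  using fpartitions_Suc_le[of p n i] by (simp add: removable_def add_cell_def)

lemma addable_remove_cell: "p \<in> fpartitions n \<Longrightarrow> removable p r \<Longrightarrow> addable (remove_cell p r) r"
  using fpartitions_Suc_le[of p n "r - 1"]
  by (cases r) (auto simp: addable_def removable_def remove_cell_def)

lemma remove_add_cell [simp]: "remove_cell (add_cell p i) i = p"
  by (simp add: remove_cell_def add_cell_def)

lemma add_remove_cell: "removable p r \<Longrightarrow> add_cell (remove_cell p r) r = p"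
  by (auto simp: removable_def remove_cell_def add_cell_def)

lemma sum_removable_eq_sum_addable:
  "(\<Sum>l\<in>fpartitions (Suc n). \<Sum>r<K. if removable l r then H l r else 0)
 = (\<Sum>m\<in>fpartitions n. \<Sum>i<K. if addable m i then H (add_cell m i) i else (0::'a::comm_monoid_add))"
proof -
  let ?L = "{a \<in> fpartitions (Suc n) \<times> {..<K}. removable (fst a) (snd a)}"
  let ?R = "{b \<in> fpartitions n \<times> {..<K}. addable (fst b) (snd b)}"
  have "bij_betw (\<lambda>b. (add_cell (fst b) (snd b), snd b)) ?R ?L"
    by (rule bij_betw_byWitness[where f' = "\<lambda>a. (remove_cell (fst a) (snd a), snd a)"])
      (auto simp: add_remove_cell add_cell_fpartitions removable_add_cell
        remove_cell_fpartitions addable_remove_cell)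
  then have "(\<Sum>b\<in>?R. H (add_cell (fst b) (snd b)) (snd b)) = (\<Sum>a\<in>?L. H (fst a) (snd a))"
    using sum.reindex_bij_betw[where g = "\<lambda>a. H (fst a) (snd a)"] by fastforce
  then show ?thesis
    by (simp add: sum.cartesian_product sum.inter_filter finite_fpartitions case_prod_beta)
qed

lemma remove_cell_add_cell_commute: "i \<noteq> r \<Longrightarrow> remove_cell (add_cell v i) r = add_cell (remove_cell v r) i"
  by (auto simp: remove_cell_def add_cell_def fun_eq_iff)

lemma add_cell_commute: "add_cell (add_cell v j) i = add_cell (add_cell v i) j"
  by (auto simp: add_cell_def fun_eq_iff)

lemma remove_cell_commute: "i \<noteq> j \<Longrightarrow> remove_cell (remove_cell v j) i = remove_cell (remove_cell v i) j"
  by (auto simp: remove_cell_def fun_eq_iff)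

lemma addable_removable_swap:
  assumes "antimono v" "i \<noteq> r"
  shows "(addable v i \<and> removable (add_cell v i) r) \<longleftrightarrow> (removable v r \<and> addable (remove_cell v r) i)"
  using assms(2) antimono_iff_le_Suc[THEN iffD1, OF assms(1)]
  unfolding addable_def removable_def add_cell_def remove_cell_def
  by (cases i) (auto split: if_splits)

lemma sign_below_add_cell:
  assumes "j < K"
  shows "sign_below K (add_cell p j) i = (if i < j then - sign_below K p i else sign_below K p i)"
proof (cases "i < j")
  case True
  then have "(\<Sum>k = Suc i..<K. add_cell p j k) = Suc (\<Sum>k = Suc i..<K. p k)"
    using assms sum_fun_upd[of "{Suc i..<K}" j p "Suc (p j)"] by (simp add: add_cell_def)
  then show ?thesis
    using True by (simp add: sign_below_def)
next
  case False
  then have "(\<Sum>k = Suc i..<K. add_cell p j k) = (\<Sum>k = Suc i..<K. p k)"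
    by (intro sum.cong) (auto simp: add_cell_def)
  then show ?thesis
    using False by (simp add: sign_below_def)
qed

lemma sign_below_remove_cell:
  "j < K \<Longrightarrow> removable p j \<Longrightarrow>
    sign_below K (remove_cell p j) i = (if i < j then - sign_below K p i else sign_below K p i)"
  using sign_below_add_cell[of j K "remove_cell p j" i] add_remove_cell[of p j]
  by (auto split: if_splits)

lemma sign_below_add_cell_same [simp]: "sign_below K (add_cell p i) i = sign_below K p i"
  unfolding sign_below_def add_cell_def by (intro arg_cong[where f = "power (-1)"] sum.cong) auto

lemma sign_below_Suc:
  "Suc j < K \<Longrightarrow> sign_below K p j = (-1) ^ p (Suc j) * sign_below K p (Suc j)"
  unfolding sign_below_def by (simp add: sum.atLeast_Suc_lessThan power_add)

lemma sign_below_mult_self [simp]: "sign_below K p i * sign_below K p i = 1"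
  by (simp add: sign_below_def power_add[symmetric])

lemma of_int_sign_below_mult_self [simp]:
  "of_int (sign_below K p i) * of_int (sign_below K p i) = (1::'a::ring_1)"
  by (simp flip: of_int_mult)

lemma sign_below_add_remove_swap:
  assumes "i < K" "r < K" "i \<noteq> r" "removable v r"
  shows "sign_below K v i * sign_below K (add_cell v i) r
       = - (sign_below K v r * sign_below K (remove_cell v r) i)"
  using sign_below_add_cell[OF assms(1), of v r] sign_below_remove_cell[OF assms(2,4), of i] assms(3)
  by (cases "i < r") auto

lemma sign_below_add_add_swap:
  assumes "i < K" "j < K" "i \<noteq> j"
  shows "sign_below K v j * sign_below K (add_cell v j) i
       = - (sign_below K v i * sign_below K (add_cell v i) j)"
  using sign_below_add_cell[OF assms(1), of v j] sign_below_add_cell[OF assms(2), of v i] assms(3)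
  by (cases "i < j") auto

lemma sign_below_remove_remove_swap:
  assumes "r < K" "s < K" "r \<noteq> s" "removable v r" "removable v s"
  shows "sign_below K v r * sign_below K (remove_cell v r) s
       = - (sign_below K v s * sign_below K (remove_cell v s) r)"
  using sign_below_remove_cell[OF assms(1,4), of s] sign_below_remove_cell[OF assms(2,5), of r] assms(3)
  by (cases "r < s") auto

text \<open>Row \<open>i + 1\<close> is addable exactly when row \<open>i\<close> is removable.\<close>

lemma alternating_sum_addable_removable:
  assumes "p K = 0"
  shows "(\<Sum>i<Suc K. if addable p i then (-1::int) ^ i else 0)
       + (\<Sum>i<Suc K. if removable p i then (-1) ^ i else 0) = 1"
proof -
  have "(\<Sum>i<Suc K. if addable p i then (-1::int) ^ i else 0)
      = 1 + (\<Sum>i<K. if addable p (Suc i) then (-1) ^ Suc i else 0)"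
    by (simp only: sum.lessThan_Suc_shift) (simp add: addable_def)
  also have "(\<Sum>i<K. if addable p (Suc i) then (-1::int) ^ Suc i else 0)
      = (\<Sum>i<K. - (if removable p i then (-1) ^ i else 0))"
    by (intro sum.cong) (auto simp: addable_def removable_def)
  finally show ?thesis
    using assms by (simp add: removable_def sum_negf)
qed

section \<open>The corner recursion\<close>

text \<open>Everything up to the last sections only uses that \<open>I\<close> satisfies the corner recursion of the
  sign-imbalance (lemma \<open>fsign_imbalance_rec\<close>).\<close>

locale corner_recursion =
  fixes K :: nat and I :: "(nat \<Rightarrow> nat) \<Rightarrow> int"
  assumes corner_rec: "\<And>n p. p \<in> fpartitions (Suc n) \<Longrightarrow> Suc n \<le> K \<Longrightarrow>
      I p = (\<Sum>r<K. if removable p r then sign_below K p r * I (remove_cell p r) else 0)"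
    and I_empty: "I (\<lambda>_. 0) = 1"
begin

definition add_sum :: "(nat \<Rightarrow> nat) \<Rightarrow> int" where
  "add_sum v = (\<Sum>i<K. if addable v i then (-1) ^ i * sign_below K v i * I (add_cell v i) else 0)"

lemma sum_removable_add_sum:
  assumes v: "v \<in> fpartitions n" and "n < K"
    and IH: "\<And>u. 0 < n \<Longrightarrow> u \<in> fpartitions (n - 1) \<Longrightarrow> add_sum u = (if even (n - 1) then I u else 0)"
  shows "(\<Sum>r<K. if removable v r then sign_below K v r * add_sum (remove_cell v r) else 0)
       = (if odd n then I v else 0)"
proof (cases n)
  case 0
  then show ?thesis
    using v by (simp add: fpartitions_0 removable_def)
next
  case (Suc n')
  have "(\<Sum>r<K. if removable v r then sign_below K v r * add_sum (remove_cell v r) else 0)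
      = (\<Sum>r<K. if even n' then (if removable v r then sign_below K v r * I (remove_cell v r) else 0) else 0)"
    using IH remove_cell_fpartitions v unfolding Suc by (intro sum.cong refl) auto
  also have "\<dots> = (if even n' then I v else 0)"
    using corner_rec[of v n'] v \<open>n < K\<close> Suc by simp
  finally show ?thesis
    using Suc by simp
qed

definition add_remove_term :: "(nat \<Rightarrow> nat) \<Rightarrow> nat \<Rightarrow> nat \<Rightarrow> int" where
  "add_remove_term v i r = (if addable v i \<and> removable (add_cell v i) r
     then (-1) ^ i * (sign_below K v i * sign_below K (add_cell v i) r) * I (remove_cell (add_cell v i) r)
     else 0)"

definition remove_add_term :: "(nat \<Rightarrow> nat) \<Rightarrow> nat \<Rightarrow> nat \<Rightarrow> int" where
  "remove_add_term v r i = (if removable v r \<and> addable (remove_cell v r) i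
     then (-1) ^ i * (sign_below K v r * sign_below K (remove_cell v r) i) * I (add_cell (remove_cell v r) i)
     else 0)"

lemma add_sum_eq_sum_add_remove_term:
  assumes v: "v \<in> fpartitions n" and "n < K"
  shows "add_sum v = (\<Sum>i<K. \<Sum>r<K. add_remove_term v i r)"
  unfolding add_sum_def
proof (intro sum.cong refl)
  fix i
  show "(if addable v i then (-1) ^ i * sign_below K v i * I (add_cell v i) else 0)
      = (\<Sum>r<K. add_remove_term v i r)"
    using corner_rec[OF add_cell_fpartitions[OF v]] \<open>n < K\<close>
    by (auto simp: add_remove_term_def sum_distrib_left algebra_simps if_distrib cong: if_cong)
qed

lemma sum_removable_add_sum_eq_sum_remove_add_term:
  "(\<Sum>r<K. if removable v r then sign_below K v r * add_sum (remove_cell v r) else 0)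
 = (\<Sum>r<K. \<Sum>i<K. remove_add_term v r i)"
  unfolding add_sum_def
  by (intro sum.cong refl)
    (auto simp: remove_add_term_def sum_distrib_left algebra_simps if_distrib cong: if_cong)

lemma add_remove_term_swap:
  assumes v: "v \<in> fpartitions n" and "i < K" "r < K" "i \<noteq> r"
  shows "add_remove_term v i r = - remove_add_term v r i"
proof (cases "removable v r \<and> addable (remove_cell v r) i")
  case True
  then have "addable v i \<and> removable (add_cell v i) r"
    using addable_removable_swap[OF fpartitionsD(1)[OF v] \<open>i \<noteq> r\<close>] by blast
  then show ?thesis
    using True sign_below_add_remove_swap[OF assms(2-4)] remove_cell_add_cell_commute[OF \<open>i \<noteq> r\<close>]
    by (simp add: add_remove_term_def remove_add_term_def)
next
  case False
  then have "\<not> (addable v i \<and> removable (add_cell v i) r)"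
    using addable_removable_swap[OF fpartitionsD(1)[OF v] \<open>i \<noteq> r\<close>] by blast
  then have "add_remove_term v i r = 0"
    unfolding add_remove_term_def by (rule if_not_P)
  moreover have "remove_add_term v r i = 0"
    unfolding remove_add_term_def using False by (rule if_not_P)
  ultimately show ?thesis
    by simp
qed

lemma sum_diagonal_add_remove_terms:
  assumes v: "v \<in> fpartitions n" and "n < K"
  shows "(\<Sum>i<K. add_remove_term v i i) + (\<Sum>r<K. remove_add_term v r r) = I v"
proof -
  obtain K' where K': "K = Suc K'"
    using \<open>n < K\<close> by (cases K) auto
  have "(\<Sum>i<K. if addable v i then (-1::int) ^ i else 0)
      + (\<Sum>r<K. if removable v r then (-1) ^ r else 0) = 1"
    unfolding K' using fpartitions_zero[OF v] \<open>n < K\<close> K'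
    by (intro alternating_sum_addable_removable) simp
  moreover have "(\<Sum>i<K. add_remove_term v i i) = (\<Sum>i<K. if addable v i then (-1) ^ i else 0) * I v"
    using removable_add_cell[OF v]
    by (auto simp: add_remove_term_def sign_below_add_cell sum_distrib_right intro!: sum.cong)
  moreover have "(\<Sum>r<K. remove_add_term v r r) = (\<Sum>r<K. if removable v r then (-1) ^ r else 0) * I v"
    using addable_remove_cell[OF v]
    by (auto simp: remove_add_term_def sign_below_remove_cell add_remove_cell sum_distrib_right
        intro!: sum.cong)
  ultimately show ?thesis
    by (simp add: distrib_right[symmetric])
qed

lemma add_sum_eq: "v \<in> fpartitions n \<Longrightarrow> n < K \<Longrightarrow> add_sum v = (if even n then I v else 0)"
proof (induction n arbitrary: v rule: less_induct)
  case (less n)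
  note v = less.prems(1) and nK = less.prems(2)
  have "add_sum v + (if odd n then I v else 0)
      = (\<Sum>i<K. \<Sum>r<K. add_remove_term v i r) + (\<Sum>r<K. \<Sum>i<K. remove_add_term v r i)"
    using add_sum_eq_sum_add_remove_term[OF v nK] sum_removable_add_sum_eq_sum_remove_add_term[of v]
      sum_removable_add_sum[OF v nK less.IH] nK
    by simp
  also have "\<dots> = I v"
    using sum_square_transpose_diagonal[of K "add_remove_term v" "remove_add_term v"]
      add_remove_term_swap[OF v] sum_diagonal_add_remove_terms[OF v nK]
    by simp
  finally show ?case
    by auto
qed

end

section \<open>Weights and the two-cell identity\<close>

lemma addable_add_cell_iff:
  assumes "antimono v"
  shows "addable (add_cell v j) i \<longleftrightarrow>
    (if i = j then j = 0 \<or> v j + 2 \<le> v (j - 1) else addable v i \<or> i = Suc j)"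
  using antimono_iff_le_Suc[THEN iffD1, OF assms]
  by (cases i) (auto simp: addable_def add_cell_def le_imp_less_Suc)

lemma removable_remove_cell_iff:
  assumes "antimono v" "removable v r"
  shows "removable (remove_cell v r) s \<longleftrightarrow>
    (if s = r then v (Suc r) + 2 \<le> v r else removable v s \<or> Suc s = r)"
proof -
  have "v (Suc s) \<le> v s"
    using assms(1) by (simp add: antimono_iff_le_Suc)
  moreover have "0 < v r"
    using assms(2) by (simp add: removable_def)
  ultimately show ?thesis
    using assms(2) by (auto simp: removable_def remove_cell_def)
qed

locale row_weights =
  fixes K :: nat and x y q t :: "'a::comm_ring_1"
begin

text \<open>A row \<open>i\<close> of length \<open>n\<close> contributes \<open>n div 2\<close> to \<open>v(\<lambda>)\<close>; if \<open>i\<close> is odd (an even row in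
  the 1-indexed convention of the statistics) it also contributes \<open>n\<close> to \<open>v(\<lambda>')\<close> and
  \<open>n div 2\<close> to \<open>d(\<lambda>)\<close> and to \<open>d(\<lambda>')\<close>.\<close>

definition row_weight :: "nat \<Rightarrow> nat \<Rightarrow> 'a" where
  "row_weight i n = x ^ (n div 2) * (if odd i then y ^ n * q ^ (n div 2) * t ^ (n div 2) else 1)"

definition weight :: "(nat \<Rightarrow> nat) \<Rightarrow> 'a" where
  "weight p = (\<Prod>i<K. row_weight i (p i))"

definition hdomino :: "nat \<Rightarrow> 'a" where
  "hdomino i = x * (if odd i then y\<^sup>2 * q * t else 1)"

definition vdomino :: "nat \<Rightarrow> 'a" where
  "vdomino c = (if even c then y else x\<^sup>2 * y * q * t)"

text \<open>Multiplying by \<open>kappa\<close> turns the removal of a domino into the addition of the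
  neighbouring one, without dividing by a weight.\<close>

definition kappa :: 'a where
  "kappa = x\<^sup>2 * y\<^sup>2 * q * t"

lemma kappa_hdomino: "kappa = hdomino i * hdomino (Suc i)"
  unfolding kappa_def hdomino_def by (cases "even i") (simp_all add: power2_eq_square algebra_simps)

lemma kappa_vdomino: "kappa = vdomino c * vdomino (Suc c)"
  unfolding kappa_def vdomino_def by (simp add: power2_eq_square algebra_simps)

lemma row_weight_0 [simp]: "row_weight i 0 = 1"
  by (simp add: row_weight_def)

lemma row_weight_add_2: "row_weight i (n + 2) = row_weight i n * hdomino i"
  unfolding row_weight_def hdomino_def by (simp add: power_add power2_eq_square algebra_simps)

lemma row_weight_Suc_Suc_pair:
  "row_weight i (Suc n) * row_weight (Suc i) (Suc n) = row_weight i n * row_weight (Suc i) n * vdomino n"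
proof (cases "even n")
  case True
  then have "Suc n div 2 = n div 2"
    by presburger
  with True show ?thesis
    unfolding row_weight_def vdomino_def by (cases "even i") (simp_all add: algebra_simps)
next
  case False
  then have "Suc n div 2 = Suc (n div 2)"
    by presburger
  with False show ?thesis
    unfolding row_weight_def vdomino_def
    by (cases "even i") (simp_all add: power2_eq_square algebra_simps)
qed

lemma weight_zero: "weight (\<lambda>_. 0) = 1"
  by (simp add: weight_def)

lemma weight_add_hdomino:
  assumes "j < K"
  shows "weight (p(j := p j + 2)) = weight p * hdomino j"
proof -
  have "(\<Prod>i\<in>{..<K} - {j}. row_weight i ((p(j := p j + 2)) i)) = (\<Prod>i\<in>{..<K} - {j}. row_weight i (p i))"
    by (intro prod.cong) auto
  then show ?thesis
    using assms row_weight_add_2[of j "p j"] by (simp add: weight_def prod.remove algebra_simps)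
qed

lemma weight_add_vdomino:
  assumes "Suc j < K" "p (Suc j) = p j"
  shows "weight (p(j := Suc (p j), Suc j := Suc (p j))) = weight p * vdomino (p j)"
proof -
  let ?p = "p(j := Suc (p j), Suc j := Suc (p j))" and ?A = "{..<K} - {j} - {Suc j}"
  have split: "weight f = row_weight j (f j) * row_weight (Suc j) (f (Suc j)) * (\<Prod>i\<in>?A. row_weight i (f i))"
    for f
    using assms(1) by (simp add: weight_def prod.remove[of _ j] prod.remove[of _ "Suc j"] algebra_simps)
  have "(\<Prod>i\<in>?A. row_weight i (?p i)) = (\<Prod>i\<in>?A. row_weight i (p i))"
    by (intro prod.cong) auto
  then show ?thesis
    using split[of ?p] split[of p] row_weight_Suc_Suc_pair[of j "p j"] assms(2)
    by (simp add: algebra_simps)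
qed

lemma kappa_weight_remove_hdomino:
  assumes "j < K" "2 \<le> p j"
  shows "kappa * weight (p(j := p j - 2)) = weight p * hdomino (Suc j)"
proof -
  have "(p(j := p j - 2))(j := p j - 2 + 2) = p"
    using assms(2) by (auto simp: fun_eq_iff)
  then have "weight p = weight (p(j := p j - 2)) * hdomino j"
    using weight_add_hdomino[OF assms(1), of "p(j := p j - 2)"] by simp
  then show ?thesis
    using kappa_hdomino[of j] by (simp add: algebra_simps)
qed

lemma kappa_weight_remove_vdomino:
  assumes "Suc j < K" "p (Suc j) = p j" "0 < p j"
  shows "kappa * weight (p(j := p j - 1, Suc j := p j - 1)) = weight p * vdomino (p j)"
proof -
  obtain c where c: "p j = Suc c"
    using assms(3) gr0_implies_Suc by blast
  have "p(j := c, Suc j := c, j := Suc c, Suc j := Suc c) = p"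
    using assms(2) c by (auto simp: fun_eq_iff)
  then have "weight p = weight (p(j := c, Suc j := c)) * vdomino c"
    using weight_add_vdomino[OF assms(1), of "p(j := c, Suc j := c)"] by simp
  then show ?thesis
    using kappa_vdomino[of c] c by (simp add: algebra_simps)
qed

end

context row_weights
begin

definition add_two_term :: "(nat \<Rightarrow> nat) \<Rightarrow> nat \<Rightarrow> nat \<Rightarrow> 'a" where
  "add_two_term v j i = (if addable v j \<and> addable (add_cell v j) i
     then of_int (sign_below K v j * sign_below K (add_cell v j) i) * weight (add_cell (add_cell v j) i)
     else 0)"

definition add_two_sum :: "(nat \<Rightarrow> nat) \<Rightarrow> 'a" where
  "add_two_sum v = (\<Sum>j<K. \<Sum>i<K. add_two_term v j i)"

definition add_pair_term :: "(nat \<Rightarrow> nat) \<Rightarrow> nat \<Rightarrow> nat \<Rightarrow> 'a" where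
  "add_pair_term v j i = (if i \<noteq> j \<and> addable v j \<and> addable v i
     then of_int (sign_below K v j * sign_below K (add_cell v j) i) * weight (add_cell (add_cell v j) i)
     else 0)"

definition hdomino_add_sum :: "(nat \<Rightarrow> nat) \<Rightarrow> 'a" where
  "hdomino_add_sum v = (\<Sum>j<K. if j = 0 \<or> v j + 2 \<le> v (j - 1) then hdomino j else 0)"

definition vdomino_add_sum :: "(nat \<Rightarrow> nat) \<Rightarrow> 'a" where
  "vdomino_add_sum v =
    (\<Sum>j<K. if addable v j \<and> v (Suc j) = v j then of_int ((-1) ^ v j) * vdomino (v j) else 0)"

lemma add_two_term_split:
  assumes "antimono v"
  shows "add_two_term v j i = add_pair_term v j i + (if i = j then add_two_term v j j else 0)
    + (if i = Suc j then if v (Suc j) = v j then add_two_term v j i else 0 else 0)"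
proof -
  have "v (Suc j) \<le> v j"
    using assms by (simp add: antimono_iff_le_Suc)
  then have "i = Suc j \<Longrightarrow> addable v i \<longleftrightarrow> v (Suc j) \<noteq> v j"
    by (auto simp: addable_def)
  then show ?thesis
    by (auto simp: add_two_term_def add_pair_term_def addable_add_cell_iff[OF assms])
qed

lemma sum_add_pair_term: "(\<Sum>j<K. \<Sum>i<K. add_pair_term v j i) = 0"
proof (rule sum_square_antisymmetric)
  fix j i
  assume "j < K" "i < K"
  show "add_pair_term v j i = - add_pair_term v i j"
  proof (cases "i = j")
    case False
    then show ?thesis
      using sign_below_add_add_swap[OF \<open>i < K\<close> \<open>j < K\<close> False, of v] add_cell_commute[of v j i]
      by (simp add: add_pair_term_def)
  qed (simp add: add_pair_term_def)
qed (simp add: add_pair_term_def)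

lemma add_two_term_diagonal:
  assumes "j < K"
  shows "add_two_term v j j = (if j = 0 \<or> v j + 2 \<le> v (j - 1) then weight v * hdomino j else 0)"
proof -
  have "add_cell (add_cell v j) j = v(j := v j + 2)"
    by (simp add: add_cell_def)
  moreover have "addable v j \<and> addable (add_cell v j) j \<longleftrightarrow> j = 0 \<or> v j + 2 \<le> v (j - 1)"
    by (cases j) (auto simp: addable_def add_cell_def)
  ultimately show ?thesis
    using assms weight_add_hdomino[OF assms, of v] by (simp add: add_two_term_def sign_below_add_cell)
qed

lemma add_two_term_vertical:
  assumes "Suc j < K" "v (Suc j) = v j"
  shows "add_two_term v j (Suc j) = (if addable v j then of_int ((-1) ^ v j) * vdomino (v j) * weight v else 0)"
proof -
  have "add_cell (add_cell v j) (Suc j) = v(j := Suc (v j), Suc j := Suc (v j))"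
    using assms(2) by (simp add: add_cell_def fun_upd_twist)
  moreover have "addable (add_cell v j) (Suc j)"
    using assms(2) by (simp add: addable_def add_cell_def)
  moreover have "sign_below K v j * sign_below K (add_cell v j) (Suc j) = (-1) ^ v j"
    using assms sign_below_Suc[OF assms(1), of v] sign_below_add_cell[of j K v "Suc j"] by simp
  ultimately show ?thesis
    using assms by (simp add: add_two_term_def weight_add_vdomino algebra_simps)
qed

lemma add_two_sum_eq:
  assumes v: "v \<in> fpartitions n" and "n + 2 \<le> K"
  shows "add_two_sum v = weight v * (hdomino_add_sum v + vdomino_add_sum v)"
proof -
  have "add_two_sum v = (\<Sum>j<K. \<Sum>i<K. add_pair_term v j i + (if i = j then add_two_term v j j else 0)
      + (if i = Suc j then if v (Suc j) = v j then add_two_term v j i else 0 else 0))"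
    unfolding add_two_sum_def by (intro sum.cong refl) (rule add_two_term_split[OF fpartitionsD(1)[OF v]])
  also have "\<dots> = (\<Sum>j<K. add_two_term v j j)
      + (\<Sum>j<K. if Suc j < K then if v (Suc j) = v j then add_two_term v j (Suc j) else 0 else 0)"
    by (simp add: sum.distrib sum_add_pair_term)
  also have "(\<Sum>j<K. add_two_term v j j) = weight v * hdomino_add_sum v"
    unfolding hdomino_add_sum_def sum_distrib_left by (intro sum.cong) (auto simp: add_two_term_diagonal)
  also have "(\<Sum>j<K. if Suc j < K then if v (Suc j) = v j then add_two_term v j (Suc j) else 0 else 0)
      = weight v * vdomino_add_sum v"
    unfolding vdomino_add_sum_def sum_distrib_left
  proof (intro sum.cong refl)
    fix j assume "j \<in> {..<K}"
    moreover have "addable v j \<Longrightarrow> Suc j < K"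
      using addable_le[OF v, of j] \<open>n + 2 \<le> K\<close> by simp
    ultimately show "(if Suc j < K then if v (Suc j) = v j then add_two_term v j (Suc j) else 0 else 0)
        = weight v * (if addable v j \<and> v (Suc j) = v j then of_int ((-1) ^ v j) * vdomino (v j) else 0)"
      by (auto simp: add_two_term_vertical)
  qed
  finally show ?thesis
    by (simp add: distrib_left)
qed

end

context row_weights
begin

definition remove_two_term :: "(nat \<Rightarrow> nat) \<Rightarrow> nat \<Rightarrow> nat \<Rightarrow> 'a" where
  "remove_two_term v r s = (if removable v r \<and> removable (remove_cell v r) s
     then of_int ((-1) ^ r * sign_below K v r * ((-1) ^ s * sign_below K (remove_cell v r) s))
       * weight (remove_cell (remove_cell v r) s)
     else 0)"

definition remove_two_sum :: "(nat \<Rightarrow> nat) \<Rightarrow> 'a" where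
  "remove_two_sum v = (\<Sum>r<K. \<Sum>s<K. remove_two_term v r s)"

definition remove_pair_term :: "(nat \<Rightarrow> nat) \<Rightarrow> nat \<Rightarrow> nat \<Rightarrow> 'a" where
  "remove_pair_term v r s = (if s \<noteq> r \<and> removable v r \<and> removable v s
     then of_int ((-1) ^ r * sign_below K v r * ((-1) ^ s * sign_below K (remove_cell v r) s))
       * weight (remove_cell (remove_cell v r) s)
     else 0)"

definition hdomino_remove_sum :: "(nat \<Rightarrow> nat) \<Rightarrow> 'a" where
  "hdomino_remove_sum v = (\<Sum>r<K. if v (Suc r) + 2 \<le> v r then hdomino (Suc r) else 0)"

definition vdomino_remove_sum :: "(nat \<Rightarrow> nat) \<Rightarrow> 'a" where
  "vdomino_remove_sum v =
    (\<Sum>r<K. if 0 < r \<and> removable v r \<and> v r = v (r - 1) then of_int ((-1) ^ v r) * vdomino (v r) else 0)"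

lemma remove_two_term_split:
  assumes "antimono v"
  shows "remove_two_term v r s = remove_pair_term v r s + (if s = r then remove_two_term v r r else 0)
    + (if s = r - 1 then if 0 < r \<and> v r = v s then remove_two_term v r s else 0 else 0)"
proof (cases "removable v r")
  case True
  note iff = removable_remove_cell_iff[OF assms True, of s]
  consider "s = r" | "0 < r" "s = r - 1" | "s \<noteq> r" "\<not> (0 < r \<and> s = r - 1)"
    by blast
  then show ?thesis
  proof cases
    case 1
    then show ?thesis
      by (auto simp: remove_pair_term_def)
  next
    case 2
    then have "Suc s = r" "s \<noteq> r"
      by simp_all
    moreover have "v r \<le> v s"
      using assms 2 by (simp add: antimono_def)
    ultimately have "removable v s \<longleftrightarrow> v r \<noteq> v s"
      by (auto simp: removable_def)
    moreover have "removable (remove_cell v r) s"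
      using iff \<open>Suc s = r\<close> by simp
    ultimately show ?thesis
      using 2 True \<open>s \<noteq> r\<close> by (simp add: remove_two_term_def remove_pair_term_def)
  next
    case 3
    then have "removable (remove_cell v r) s \<longleftrightarrow> removable v s"
      using iff by auto
    then show ?thesis
      using 3 True by (auto simp: remove_two_term_def remove_pair_term_def)
  qed
qed (auto simp: remove_two_term_def remove_pair_term_def)

lemma sum_remove_pair_term: "(\<Sum>r<K. \<Sum>s<K. remove_pair_term v r s) = 0"
proof (rule sum_square_antisymmetric)
  fix r s
  assume "r < K" "s < K"
  show "remove_pair_term v r s = - remove_pair_term v s r"
  proof (cases "r \<noteq> s \<and> removable v r \<and> removable v s")
    case True
    let ?e = "(-1) ^ r * (-1) ^ s :: int"
    have "(-1) ^ r * sign_below K v r * ((-1) ^ s * sign_below K (remove_cell v r) s)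
        = ?e * (sign_below K v r * sign_below K (remove_cell v r) s)"
      by (simp add: mult_ac)
    also have "\<dots> = ?e * - (sign_below K v s * sign_below K (remove_cell v s) r)"
      using True sign_below_remove_remove_swap[OF \<open>r < K\<close> \<open>s < K\<close>, of v] by simp
    also have "\<dots> = - ((-1) ^ s * sign_below K v s * ((-1) ^ r * sign_below K (remove_cell v s) r))"
      by (simp add: mult_ac)
    finally have "(-1) ^ r * sign_below K v r * ((-1) ^ s * sign_below K (remove_cell v r) s)
        = - ((-1) ^ s * sign_below K v s * ((-1) ^ r * sign_below K (remove_cell v s) r))" .
    then show ?thesis
      using True remove_cell_commute[of s r v] by (simp add: remove_pair_term_def)
  qed (auto simp: remove_pair_term_def)
qed (simp add: remove_pair_term_def)

lemma kappa_remove_two_term_diagonal: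
  assumes "r < K"
  shows "kappa * remove_two_term v r r = (if v (Suc r) + 2 \<le> v r then weight v * hdomino (Suc r) else 0)"
proof (cases "v (Suc r) + 2 \<le> v r")
  case True
  then have "removable v r" "removable (remove_cell v r) r"
    by (auto simp: removable_def remove_cell_def)
  moreover have "remove_cell (remove_cell v r) r = v(r := v r - 2)"
    by (auto simp: remove_cell_def fun_eq_iff)
  ultimately show ?thesis
    using True assms kappa_weight_remove_hdomino[OF assms, of v]
    by (simp add: remove_two_term_def sign_below_remove_cell algebra_simps flip: power_add)
next
  case False
  then have "\<not> (removable v r \<and> removable (remove_cell v r) r)"
    by (auto simp: removable_def remove_cell_def)
  then have "remove_two_term v r r = 0"
    unfolding remove_two_term_def by (rule if_not_P)
  with False show ?thesis
    by simp
qed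

lemma kappa_remove_two_term_vertical:
  assumes "Suc s < K" "v (Suc s) = v s"
  shows "kappa * remove_two_term v (Suc s) s
       = (if removable v (Suc s) then of_int ((-1) ^ v (Suc s)) * vdomino (v (Suc s)) * weight v else 0)"
proof (cases "removable v (Suc s)")
  case True
  then obtain a where a: "v (Suc s) = Suc a"
    by (cases "v (Suc s)") (auto simp: removable_def)
  have "removable (remove_cell v (Suc s)) s"
    using a assms(2) by (simp add: removable_def remove_cell_def)
  moreover have "remove_cell (remove_cell v (Suc s)) s = v(s := v s - 1, Suc s := v s - 1)"
    using assms(2) by (auto simp: remove_cell_def fun_eq_iff)
  moreover have "sign_below K (remove_cell v (Suc s)) s = (-1) ^ a * sign_below K v (Suc s)"
    using sign_below_Suc[OF assms(1), of "remove_cell v (Suc s)"] a True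
      sign_below_remove_cell[OF assms(1) True, of "Suc s"]
    by (simp add: remove_cell_def)
  moreover have "(-1::int) ^ Suc s * (-1) ^ s * (-1) ^ a = (-1) ^ Suc a"
    by (simp flip: power_add add: minus_one_power_iff)
  ultimately show ?thesis
    using True a assms kappa_weight_remove_vdomino[OF assms, of] 
    by (simp add: remove_two_term_def algebra_simps)
qed (simp add: remove_two_term_def)


lemma kappa_remove_two_sum_eq:
  assumes "antimono v"
  shows "kappa * remove_two_sum v = weight v * (hdomino_remove_sum v + vdomino_remove_sum v)"
proof -
  have "remove_two_sum v = (\<Sum>r<K. \<Sum>s<K. remove_pair_term v r s + (if s = r then remove_two_term v r r else 0)
      + (if s = r - 1 then if 0 < r \<and> v r = v s then remove_two_term v r s else 0 else 0))"
    unfolding remove_two_sum_def by (intro sum.cong refl) (rule remove_two_term_split[OF assms])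
  also have "\<dots> = (\<Sum>r<K. remove_two_term v r r)
      + (\<Sum>r<K. if 0 < r \<and> v r = v (r - 1) then remove_two_term v r (r - 1) else 0)"
    by (simp add: sum.distrib sum_remove_pair_term) (rule sum.cong; auto)
  finally have "kappa * remove_two_sum v = (\<Sum>r<K. kappa * remove_two_term v r r)
      + (\<Sum>r<K. if 0 < r \<and> v r = v (r - 1) then kappa * remove_two_term v r (r - 1) else 0)"
    by (simp add: distrib_left sum_distrib_left if_distrib cong: if_cong)
  also have "(\<Sum>r<K. kappa * remove_two_term v r r) = weight v * hdomino_remove_sum v"
    unfolding hdomino_remove_sum_def sum_distrib_left
    by (intro sum.cong) (auto simp: kappa_remove_two_term_diagonal)
  also have "(\<Sum>r<K. if 0 < r \<and> v r = v (r - 1) then kappa * remove_two_term v r (r - 1) else 0)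
      = weight v * vdomino_remove_sum v"
    unfolding vdomino_remove_sum_def sum_distrib_left
  proof (intro sum.cong refl)
    fix r assume "r \<in> {..<K}"
    then show "(if 0 < r \<and> v r = v (r - 1) then kappa * remove_two_term v r (r - 1) else 0)
      = weight v * (if 0 < r \<and> removable v r \<and> v r = v (r - 1) then of_int ((-1) ^ v r) * vdomino (v r) else 0)"
      using kappa_remove_two_term_vertical[of "r - 1" v] by (cases r) (auto simp: algebra_simps)
  qed
  finally show ?thesis
    by (simp add: distrib_left)
qed

lemma hdomino_add_sum_eq:
  assumes "0 < K" "v (K - 1) = 0"
  shows "hdomino_add_sum v = x + hdomino_remove_sum v"
proof -
  obtain K' where K': "K = Suc K'"
    using assms(1) gr0_implies_Suc by blast
  have "hdomino_add_sum v = x + (\<Sum>r<K'. if v (Suc r) + 2 \<le> v r then hdomino (Suc r) else 0)"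
    unfolding hdomino_add_sum_def by (simp only: K' sum.lessThan_Suc_shift) (simp add: hdomino_def)
  moreover have "hdomino_remove_sum v = (\<Sum>r<K'. if v (Suc r) + 2 \<le> v r then hdomino (Suc r) else 0)"
    using assms(2) unfolding hdomino_remove_sum_def by (simp add: K')
  ultimately show ?thesis
    by simp
qed

text \<open>In a block of equal rows a vertical domino can be added at the top and removed at the
  bottom, with the same weight; only the infinite block of empty rows has no bottom, and it
  contributes \<open>vdomino 0 = y\<close>.\<close>

lemma vdomino_add_sum_eq:
  assumes mono: "antimono v" and "0 < K" "v (K - 1) = 0"
  shows "vdomino_add_sum v = y + vdomino_remove_sum v"
proof -
  have le: "v (Suc i) \<le> v i" for i
    using mono by (simp add: antimono_iff_le_Suc)
  have zero: "K - 1 \<le> i \<Longrightarrow> v i = 0" for i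
    using mono assms(3) by (metis antimonoD le_zero_eq)
  define a where "a j = (if addable v j \<and> v (Suc j) = v j then of_int ((-1) ^ v j) * vdomino (v j) else 0)"
    for j
  define b where "b r = (if 0 < r \<and> removable v r \<and> v r = v (r - 1)
    then of_int ((-1) ^ v r) * vdomino (v r) else 0)" for r
  define Z where "Z j = (if v (Suc j) = v j \<and> v (Suc (Suc j)) = v (Suc j)
    then of_int ((-1) ^ v j) * vdomino (v j) else 0)" for j
  define F where "F j = (if j = 0 then 0 else Z (j - 1))" for j
  have "(\<Sum>r<K. b r) = (\<Sum>j<K. b (Suc j))"
  proof -
    obtain K' where K': "K = Suc K'"
      using assms(2) gr0_implies_Suc by blast
    have "b (Suc K') = 0"
      using zero[of "Suc K'"] zero[of "Suc (Suc K')"] by (simp add: b_def removable_def K')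
    moreover have "(\<Sum>r<Suc K'. b r) = b 0 + (\<Sum>j<K'. b (Suc j))"
      by (rule sum.lessThan_Suc_shift)
    moreover have "(\<Sum>j<Suc K'. b (Suc j)) = (\<Sum>j<K'. b (Suc j)) + b (Suc K')"
      by (rule sum.lessThan_Suc)
    ultimately show ?thesis
      by (simp add: K' b_def)
  qed
  moreover have "a j - b (Suc j) = F (Suc j) - F j" for j
    using le[of j] le[of "Suc j"] le[of "j - 1"]
    by (cases j) (auto simp: a_def b_def F_def Z_def addable_def removable_def)
  then have "(\<Sum>j<K. a j - b (Suc j)) = F K - F 0"
    by (simp add: sum_lessThan_telescope)
  moreover have "F K - F 0 = y"
    using assms(2) zero[of "K - 1"] zero[of K] zero[of "Suc K"]
    by (simp add: F_def Z_def vdomino_def)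
  ultimately have "(\<Sum>j<K. a j) = y + (\<Sum>r<K. b r)"
    by (simp add: sum_subtractf algebra_simps)
  then show ?thesis
    by (simp add: vdomino_add_sum_def vdomino_remove_sum_def a_def b_def)
qed

lemma add_two_sum_eq_remove_two_sum:
  assumes v: "v \<in> fpartitions n" and "n + 2 \<le> K"
  shows "add_two_sum v = (x + y) * weight v + kappa * remove_two_sum v"
proof -
  have "0 < K" "v (K - 1) = 0"
    using assms fpartitions_zero[OF v, of "K - 1"] by simp_all
  then show ?thesis
    using add_two_sum_eq[OF assms] kappa_remove_two_sum_eq[OF fpartitionsD(1)[OF v]]
      hdomino_add_sum_eq vdomino_add_sum_eq[OF fpartitionsD(1)[OF v]]
    by (simp add: algebra_simps)
qed

end

section \<open>The weighted sum of sign-imbalances\<close>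

locale weighted_corner_recursion = corner_recursion K I + row_weights K x y q t
  for K :: nat and I :: "(nat \<Rightarrow> nat) \<Rightarrow> int" and x y q t :: "'a::comm_ring_1"
begin

definition weighted_sum :: "nat \<Rightarrow> 'a" where
  "weighted_sum k = (\<Sum>p\<in>fpartitions k. weight p * of_int (I p))"

definition add_one_sum :: "(nat \<Rightarrow> nat) \<Rightarrow> 'a" where
  "add_one_sum m = (\<Sum>i<K. if addable m i then of_int (sign_below K m i) * weight (add_cell m i) else 0)"

definition remove_one_sum :: "(nat \<Rightarrow> nat) \<Rightarrow> 'a" where
  "remove_one_sum m =
    (\<Sum>s<K. if removable m s then of_int ((-1) ^ s * sign_below K m s) * weight (remove_cell m s) else 0)"

lemma weighted_sum_Suc:
  assumes "Suc k \<le> K"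
  shows "weighted_sum (Suc k) = (\<Sum>m\<in>fpartitions k. of_int (I m) * add_one_sum m)"
proof -
  have "weighted_sum (Suc k) = (\<Sum>l\<in>fpartitions (Suc k). \<Sum>r<K.
      if removable l r then weight l * of_int (sign_below K l r * I (remove_cell l r)) else 0)"
    unfolding weighted_sum_def
    using corner_rec[OF _ assms]
    by (intro sum.cong refl) (auto simp: of_int_sum sum_distrib_left intro!: sum.cong)
  also have "\<dots> = (\<Sum>m\<in>fpartitions k. \<Sum>i<K.
      if addable m i then weight (add_cell m i) * of_int (sign_below K m i * I m) else 0)"
    unfolding sum_removable_eq_sum_addable by (simp cong: if_cong)
  also have "\<dots> = (\<Sum>m\<in>fpartitions k. of_int (I m) * add_one_sum m)"
    unfolding add_one_sum_def
    by (intro sum.cong refl) (auto simp: sum_distrib_left algebra_simps intro!: sum.cong)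
  finally show ?thesis .
qed

lemma add_two_sum_eq_add_one_sum:
  "add_two_sum v = (\<Sum>j<K. if addable v j then of_int (sign_below K v j) * add_one_sum (add_cell v j) else 0)"
  unfolding add_two_sum_def add_two_term_def add_one_sum_def
  by (intro sum.cong refl) (auto simp: sum_distrib_left algebra_simps intro!: sum.cong)

lemma sum_add_one_sum_Suc:
  assumes "Suc k \<le> K"
  shows "(\<Sum>m\<in>fpartitions (Suc k). of_int (I m) * add_one_sum m)
       = (\<Sum>v\<in>fpartitions k. of_int (I v) * add_two_sum v)"
proof -
  have "(\<Sum>m\<in>fpartitions (Suc k). of_int (I m) * add_one_sum m) = (\<Sum>m\<in>fpartitions (Suc k). \<Sum>r<K.
      if removable m r then of_int (sign_below K m r * I (remove_cell m r)) * add_one_sum m else 0)"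
    using corner_rec[OF _ assms]
    by (intro sum.cong refl) (auto simp: of_int_sum sum_distrib_right intro!: sum.cong)
  also have "\<dots> = (\<Sum>v\<in>fpartitions k. \<Sum>j<K.
      if addable v j then of_int (sign_below K v j * I v) * add_one_sum (add_cell v j) else 0)"
    unfolding sum_removable_eq_sum_addable by (simp cong: if_cong)
  also have "\<dots> = (\<Sum>v\<in>fpartitions k. of_int (I v) * add_two_sum v)"
    unfolding add_two_sum_eq_add_one_sum
    by (intro sum.cong refl) (auto simp: sum_distrib_left algebra_simps intro!: sum.cong)
  finally show ?thesis .
qed

lemma sum_remove_one_sum:
  assumes "k < K"
  shows "(\<Sum>m\<in>fpartitions k. of_int (I m) * remove_one_sum m) = (if odd k then weighted_sum (k - 1) else 0)"
proof (cases k)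
  case 0
  then show ?thesis
    by (simp add: fpartitions_0 remove_one_sum_def removable_def)
next
  case (Suc k')
  have "(\<Sum>m\<in>fpartitions k. of_int (I m) * remove_one_sum m) = (\<Sum>m\<in>fpartitions (Suc k'). \<Sum>s<K.
      if removable m s then of_int (I m) * (of_int ((-1) ^ s * sign_below K m s) * weight (remove_cell m s))
      else 0)"
    unfolding remove_one_sum_def Suc
    by (intro sum.cong refl) (auto simp: sum_distrib_left intro!: sum.cong)
  also have "\<dots> = (\<Sum>u\<in>fpartitions k'. \<Sum>i<K.
      if addable u i then of_int (I (add_cell u i)) * (of_int ((-1) ^ i * sign_below K u i) * weight u)
      else 0)"
    unfolding sum_removable_eq_sum_addable by (simp cong: if_cong)
  also have "\<dots> = (\<Sum>u\<in>fpartitions k'. weight u * of_int (add_sum u))"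
    unfolding add_sum_def
    by (intro sum.cong refl) (auto simp: of_int_sum sum_distrib_left algebra_simps intro!: sum.cong)
  also have "\<dots> = (\<Sum>u\<in>fpartitions k'. weight u * of_int (if even k' then I u else 0))"
    using add_sum_eq assms Suc by (intro sum.cong refl) simp
  finally show ?thesis
    using Suc by (simp add: weighted_sum_def)
qed

lemma remove_two_sum_eq_remove_one_sum:
  "remove_two_sum v = (\<Sum>r<K. if removable v r
     then of_int ((-1) ^ r * sign_below K v r) * remove_one_sum (remove_cell v r) else 0)"
  unfolding remove_two_sum_def remove_two_term_def remove_one_sum_def
  by (intro sum.cong refl) (auto simp: sum_distrib_left algebra_simps intro!: sum.cong)

lemma sum_remove_two_sum:
  assumes "k < K"
  shows "(\<Sum>v\<in>fpartitions k. of_int (I v) * remove_two_sum v) = 0"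
proof (cases k)
  case 0
  then show ?thesis
    by (simp add: fpartitions_0 remove_two_sum_eq_remove_one_sum removable_def)
next
  case (Suc k')
  have "(\<Sum>v\<in>fpartitions k. of_int (I v) * remove_two_sum v) = (\<Sum>v\<in>fpartitions (Suc k'). \<Sum>r<K.
      if removable v r then of_int (I v) * (of_int ((-1) ^ r * sign_below K v r)
        * remove_one_sum (remove_cell v r)) else 0)"
    unfolding remove_two_sum_eq_remove_one_sum Suc
    by (intro sum.cong refl) (auto simp: sum_distrib_left intro!: sum.cong)
  also have "\<dots> = (\<Sum>m\<in>fpartitions k'. \<Sum>i<K.
      if addable m i then of_int (I (add_cell m i)) * (of_int ((-1) ^ i * sign_below K m i) * remove_one_sum m)
      else 0)"
    unfolding sum_removable_eq_sum_addable by (simp cong: if_cong)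
  also have "\<dots> = (\<Sum>m\<in>fpartitions k'. of_int (add_sum m) * remove_one_sum m)"
    unfolding add_sum_def
    by (intro sum.cong refl) (auto simp: of_int_sum sum_distrib_left algebra_simps intro!: sum.cong)
  also have "\<dots> = (if even k' then (\<Sum>m\<in>fpartitions k'. of_int (I m) * remove_one_sum m) else 0)"
    using add_sum_eq assms Suc by (simp cong: sum.cong)
  also have "\<dots> = 0"
    using sum_remove_one_sum[of k'] assms Suc by simp
  finally show ?thesis .
qed

lemma weighted_sum_Suc_Suc:
  assumes "k + 2 \<le> K"
  shows "weighted_sum (k + 2) = (x + y) * weighted_sum k"
proof -
  have "weighted_sum (k + 2) = (\<Sum>v\<in>fpartitions k. of_int (I v) * add_two_sum v)"
    using weighted_sum_Suc[of "Suc k"] sum_add_one_sum_Suc[of k] assms by simp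
  also have "\<dots> = (\<Sum>v\<in>fpartitions k. (x + y) * (weight v * of_int (I v)) + kappa * (of_int (I v) * remove_two_sum v))"
    using add_two_sum_eq_remove_two_sum assms by (intro sum.cong refl) (simp add: algebra_simps)
  also have "\<dots> = (x + y) * weighted_sum k"
    using sum_remove_two_sum[of k] assms
    by (simp add: weighted_sum_def sum.distrib sum_distrib_left[symmetric])
  finally show ?thesis .
qed

lemma weighted_sum_0: "weighted_sum 0 = 1"
  by (simp add: weighted_sum_def fpartitions_0 weight_zero I_empty)

lemma weighted_sum_1:
  assumes "0 < K"
  shows "weighted_sum 1 = 1"
proof -
  have "add_one_sum (\<lambda>_. 0) = of_int (sign_below K (\<lambda>_. 0) 0) * weight (add_cell (\<lambda>_. 0) 0)"
    unfolding add_one_sum_def using assms by (simp add: addable_def)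
  also have "\<dots> = 1"
    by (simp add: sign_below_def weight_def add_cell_def row_weight_def prod.neutral)
  finally show ?thesis
    using weighted_sum_Suc[of 0] assms by (simp add: fpartitions_0 I_empty)
qed

lemma weighted_sum_eq: "m \<le> K \<Longrightarrow> weighted_sum m = (x + y) ^ (m div 2)"
proof (induction m rule: nat_less_induct)
  case (1 m)
  consider "m = 0" | "m = 1" | k where "m = k + 2"
    by (metis One_nat_def add_2_eq_Suc' not0_implies_Suc)
  then show ?case
    using 1 weighted_sum_0 weighted_sum_1 weighted_sum_Suc_Suc by cases auto
qed

end

section \<open>Removing the largest entry of a tableau\<close>

lemma word_perm_permutes:
  assumes "distinct w" "set w = {1..length w}"
  shows "word_perm w permutes {1..length w}"
proof (rule bij_imp_permutes)
  have "bij_betw (\<lambda>k. k - 1) {1..length w} {..<length w}"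
    by (rule bij_betw_byWitness[where f' = Suc]) auto
  moreover have "bij_betw ((!) w) {..<length w} {1..length w}"
    using assms by (intro bij_betw_nth) auto
  ultimately have "bij_betw ((!) w \<circ> (\<lambda>k. k - 1)) {1..length w} {1..length w}"
    by (rule bij_betw_trans)
  then show "bij_betw (word_perm w) {1..length w} {1..length w}"
    by (rule bij_betw_cong[THEN iffD1, rotated]) (simp add: word_perm_def)
qed (auto simp: word_perm_def)

lemma word_perm_swap:
  "word_perm (A @ b # a # C) = word_perm (A @ a # b # C) \<circ> transpose (Suc (length A)) (Suc (Suc (length A)))"
  by (rule ext) (auto simp: word_perm_def nth_append nth_Cons' transpose_def)

lemma word_perm_snoc_max: "word_perm (A @ [Suc (length A)]) = word_perm A"
  by (rule ext) (auto simp: word_perm_def nth_append)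

lemma sign_word_perm_insert_max:
  assumes "distinct (A @ C)" "set (A @ C) = {1..length (A @ C)}"
  shows "sign (word_perm (A @ Suc (length (A @ C)) # C)) = (-1) ^ length C * sign (word_perm (A @ C))"
  using assms
proof (induction C arbitrary: A)
  case Nil
  then show ?case
    using word_perm_snoc_max[of A] by simp
next
  case (Cons c C)
  let ?m = "Suc (length (A @ c # C))"
  have "sign (word_perm ((A @ [c]) @ ?m # C)) = (-1) ^ length C * sign (word_perm ((A @ [c]) @ C))"
    using Cons.IH[of "A @ [c]"] Cons.prems by simp
  moreover have "?m \<notin> set (A @ c # C)"
    using Cons.prems(2) by auto
  then have "distinct (A @ c # ?m # C)" "set (A @ c # ?m # C) = {1..length (A @ c # ?m # C)}"
    using Cons.prems by (auto simp: atLeastAtMostSuc_conv)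
  then have "permutation (word_perm (A @ c # ?m # C))"
    using word_perm_permutes permutation_permutes by blast
  then have "sign (word_perm (A @ ?m # c # C)) = - sign (word_perm (A @ c # ?m # C))"
    unfolding word_perm_swap[of A ?m c C] by (simp add: sign_compose permutation_swap_id sign_swap_id)
  ultimately show ?case
    by simp
qed


definition corner :: "nat list \<Rightarrow> nat \<Rightarrow> bool" where
  "corner lam r \<longleftrightarrow> r < length lam \<and> 0 < lam ! r \<and> (Suc r < length lam \<longrightarrow> lam ! Suc r < lam ! r)"

definition corner_cell :: "nat list \<Rightarrow> nat \<Rightarrow> nat \<times> nat" where
  "corner_cell lam r = (r, lam ! r - 1)"

definition remove_corner :: "nat list \<Rightarrow> nat \<Rightarrow> nat list" where
  "remove_corner lam r = lam[r := lam ! r - 1]"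

definition cell_list :: "nat \<Rightarrow> (nat \<Rightarrow> nat) \<Rightarrow> (nat \<times> nat) list" where
  "cell_list n L = concat (map (\<lambda>i. map (\<lambda>j. (i, j)) [0..<L i]) [0..<n])"

lemma set_cell_list: "set (cell_list n L) = {(i, j). i < n \<and> j < L i}"
  by (auto simp: cell_list_def)

lemma distinct_cell_list: "distinct (cell_list n L)"
proof (induction n)
  case (Suc n)
  have "cell_list (Suc n) L = cell_list n L @ map (\<lambda>j. (n, j)) [0..<L n]"
    by (simp add: cell_list_def)
  then show ?case
    using Suc by (auto simp: distinct_map inj_on_def set_cell_list)
qed (simp add: cell_list_def)

lemma reading_word_eq_map: "reading_word lam T = map T (cell_list (length lam) ((!) lam))"
  by (simp add: reading_word_def cell_list_def map_concat comp_def)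

lemma cells_eq_set_cell_list: "cells lam = set (cell_list (length lam) ((!) lam))"
  by (auto simp: cells_def set_cell_list)

lemma finite_cells: "finite (cells lam)"
  by (simp add: cells_eq_set_cell_list)

lemma reading_word_SYT:
  assumes "T \<in> SYT lam"
  shows "distinct (reading_word lam T)" "set (reading_word lam T) = {1..sum_list lam}"
    "length (reading_word lam T) = sum_list lam"
proof -
  have b: "bij_betw T (set (cell_list (length lam) ((!) lam))) {1..sum_list lam}"
    using assms cells_eq_set_cell_list by (simp add: SYT_def)
  then show "distinct (reading_word lam T)" "set (reading_word lam T) = {1..sum_list lam}"
    by (simp_all add: reading_word_eq_map distinct_map distinct_cell_list bij_betw_def)
  then show "length (reading_word lam T) = sum_list lam"
    using distinct_card by fastforce
qed

lemma finite_SYT: "finite (SYT lam)"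
proof -
  have "inj_on (\<lambda>T. restrict T (cells lam)) (SYT lam)"
  proof (rule inj_onI)
    fix T1 T2 assume "T1 \<in> SYT lam" "T2 \<in> SYT lam" "restrict T1 (cells lam) = restrict T2 (cells lam)"
    then show "T1 = T2"
      by (auto simp: SYT_def fun_eq_iff restrict_def split: if_splits) (metis prod.collapse)
  qed
  moreover have "(\<lambda>T. restrict T (cells lam)) ` SYT lam \<subseteq> Pi\<^sub>E (cells lam) (\<lambda>_. {1..sum_list lam})"
    by (auto simp: SYT_def bij_betw_def)
  then have "finite ((\<lambda>T. restrict T (cells lam)) ` SYT lam)"
    by (rule finite_subset) (simp add: finite_PiE finite_cells)
  ultimately show ?thesis
    using finite_imageD by blast
qed

lemma cells_remove_corner: "corner lam r \<Longrightarrow> cells (remove_corner lam r) = cells lam - {corner_cell lam r}"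
  by (auto simp: cells_def remove_corner_def corner_cell_def corner_def nth_list_update split: if_splits)

lemma corner_cell_in_cells: "corner lam r \<Longrightarrow> corner_cell lam r \<in> cells lam"
  by (simp add: cells_def corner_cell_def corner_def)

lemma sum_list_remove_corner: "corner lam r \<Longrightarrow> sum_list (remove_corner lam r) = sum_list lam - 1"
  using sum_list_update[of r lam "lam ! r - 1"] elem_le_sum_list[of r lam]
  by (simp add: remove_corner_def corner_def)

lemma corner_cell_not_left:
  "corner lam r \<Longrightarrow> (i, Suc j) \<in> cells lam \<Longrightarrow> (i, j) \<noteq> corner_cell lam r"
  by (auto simp: cells_def corner_cell_def corner_def)

lemma corner_cell_not_above:
  "corner lam r \<Longrightarrow> (Suc i, j) \<in> cells lam \<Longrightarrow> (i, j) \<noteq> corner_cell lam r"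
  by (auto simp: cells_def corner_cell_def corner_def)

lemma cells_left: "(i, Suc j) \<in> cells lam \<Longrightarrow> (i, j) \<in> cells lam"
  by (simp add: cells_def)

lemma cells_above: "sorted_wrt (\<ge>) lam \<Longrightarrow> (Suc i, j) \<in> cells lam \<Longrightarrow> (i, j) \<in> cells lam"
  using sorted_wrt_nth_less[of "(\<ge>)" lam i "Suc i"] by (auto simp: cells_def)

lemma SYT_le_sum_list:
  assumes "T \<in> SYT lam" "a \<in> cells lam"
  shows "T a \<le> sum_list lam"
proof -
  have "bij_betw T (cells lam) {1..sum_list lam}"
    using assms(1) by (simp add: SYT_def)
  then show ?thesis
    using assms(2) by (auto simp: bij_betw_def)
qed

lemma bij_betw_fun_upd_insert:
  assumes "bij_betw f (A - {a}) B" "a \<in> A" "b \<notin> B"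
  shows "bij_betw (f(a := b)) A (insert b B)"
proof -
  have "bij_betw (f(a := b)) (A - {a}) B"
    using assms(1) by (rule bij_betw_cong[THEN iffD1, rotated]) simp
  moreover have "bij_betw (f(a := b)) {a} {b}"
    by simp
  ultimately have "bij_betw (f(a := b)) ((A - {a}) \<union> {a}) (B \<union> {b})"
    using assms(3) by (intro bij_betw_combine) auto
  then show ?thesis
    using assms(2) by (simp add: insert_absorb)
qed

lemma SYT_extend:
  assumes srt: "sorted_wrt (\<ge>) lam" and r: "corner lam r" and T': "T' \<in> SYT (remove_corner lam r)"
  shows "T'(corner_cell lam r := sum_list lam) \<in> SYT lam"
proof -
  let ?m = "sum_list lam" and ?c = "corner_cell lam r"
  have cells': "cells (remove_corner lam r) = cells lam - {?c}"
    using r by (rule cells_remove_corner)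
  have "0 < ?m"
    using r elem_le_sum_list[of r lam] by (simp add: corner_def)
  have b': "bij_betw T' (cells lam - {?c}) {1..?m - 1}"
    using T' cells' sum_list_remove_corner[OF r] by (simp add: SYT_def)
  have less: "T' a < ?m" if "a \<in> cells lam - {?c}" for a
    using SYT_le_sum_list[OF T', of a] that cells' sum_list_remove_corner[OF r] \<open>0 < ?m\<close> by simp
  have "bij_betw (T'(?c := ?m)) (cells lam) (insert ?m {1..?m - 1})"
    using b' corner_cell_in_cells[OF r] by (rule bij_betw_fun_upd_insert) auto
  moreover have "insert ?m {1..?m - 1} = {1..?m}"
    using \<open>0 < ?m\<close> by auto
  ultimately have bij: "bij_betw (T'(?c := ?m)) (cells lam) {1..?m}"
    by simp
  have zero: "\<forall>a. a \<notin> cells lam \<longrightarrow> (T'(?c := ?m)) a = 0"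
    using T' cells' corner_cell_in_cells[OF r] by (auto simp: SYT_def)
  have row: "(T'(?c := ?m)) (i, j) < (T'(?c := ?m)) (i, Suc j)" if "(i, Suc j) \<in> cells lam" for i j
  proof (cases "(i, Suc j) = ?c")
    case True
    then have "(i, j) \<noteq> ?c"
      by (metis n_not_Suc_n prod.inject)
    with True show ?thesis
      using less[of "(i, j)"] cells_left[OF that] by simp
  next
    case False
    then show ?thesis
      using T' cells' that corner_cell_not_left[OF r that] by (simp add: SYT_def)
  qed
  have col: "(T'(?c := ?m)) (i, j) < (T'(?c := ?m)) (Suc i, j)" if "(Suc i, j) \<in> cells lam" for i j
  proof (cases "(Suc i, j) = ?c")
    case True
    then have "(i, j) \<noteq> ?c"
      by (metis n_not_Suc_n prod.inject)
    with True show ?thesis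
      using less[of "(i, j)"] cells_above[OF srt that] by simp
  next
    case False
    then show ?thesis
      using T' cells' that corner_cell_not_above[OF r that] by (simp add: SYT_def)
  qed
  show ?thesis
    unfolding SYT_def using bij zero row col by blast
qed


lemma SYT_max_at_corner:
  assumes T: "T \<in> SYT lam" and "0 < sum_list lam"
  obtains r where "corner lam r" "T (corner_cell lam r) = sum_list lam"
proof -
  let ?m = "sum_list lam"
  have "bij_betw T (cells lam) {1..?m}"
    using T by (simp add: SYT_def)
  then have "?m \<in> T ` cells lam"
    using \<open>0 < ?m\<close> by (auto simp: bij_betw_def)
  then obtain r j where c: "(r, j) \<in> cells lam" "T (r, j) = ?m"
    by auto
  have "j = lam ! r - 1"
  proof (rule ccontr)
    assume "j \<noteq> lam ! r - 1"
    then have succ: "(r, Suc j) \<in> cells lam"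
      using c by (auto simp: cells_def)
    then have "T (r, j) < T (r, Suc j)"
      using T by (simp add: SYT_def)
    then show False
      using SYT_le_sum_list[OF T succ] c by simp
  qed
  moreover have "corner lam r"
  proof -
    have "lam ! Suc r < lam ! r" if "Suc r < length lam"
    proof (rule ccontr)
      assume "\<not> lam ! Suc r < lam ! r"
      then have succ: "(Suc r, j) \<in> cells lam"
        using c that by (auto simp: cells_def)
      then have "T (r, j) < T (Suc r, j)"
        using T by (simp add: SYT_def)
      then show False
        using SYT_le_sum_list[OF T succ] c by simp
    qed
    then show ?thesis
      using c by (auto simp: corner_def cells_def)
  qed
  ultimately show ?thesis
    using that c by (simp add: corner_cell_def)
qed

lemma SYT_remove_max:
  assumes T: "T \<in> SYT lam" and r: "corner lam r" and max: "T (corner_cell lam r) = sum_list lam"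
  shows "T(corner_cell lam r := 0) \<in> SYT (remove_corner lam r)"
proof -
  let ?m = "sum_list lam" and ?c = "corner_cell lam r"
  have cells': "cells (remove_corner lam r) = cells lam - {?c}"
    using r by (rule cells_remove_corner)
  have "0 < ?m"
    using r elem_le_sum_list[of r lam] by (simp add: corner_def)
  have "bij_betw T (cells lam - {?c}) ({1..?m} - {?m})"
    using T max corner_cell_in_cells[OF r] \<open>0 < ?m\<close>
    by (intro bij_betw_DiffI) (auto simp: SYT_def)
  moreover have "{1..?m} - {?m} = {1..?m - 1}"
    by auto
  ultimately have "bij_betw T (cells lam - {?c}) {1..?m - 1}"
    by simp
  then have "bij_betw (T(?c := 0)) (cells lam - {?c}) {1..?m - 1}"
    by (rule bij_betw_cong[THEN iffD1, rotated]) simp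
  then have "bij_betw (T(?c := 0)) (cells (remove_corner lam r)) {1..sum_list (remove_corner lam r)}"
    using cells' sum_list_remove_corner[OF r] by simp
  moreover have "\<forall>a. a \<notin> cells (remove_corner lam r) \<longrightarrow> (T(?c := 0)) a = 0"
    using T cells' by (auto simp: SYT_def)
  moreover have "(T(?c := 0)) (i, j) < (T(?c := 0)) (i, Suc j)" if "(i, Suc j) \<in> cells (remove_corner lam r)" for i j
    using that T cells' corner_cell_not_left[OF r, of i j] by (auto simp: SYT_def)
  moreover have "(T(?c := 0)) (i, j) < (T(?c := 0)) (Suc i, j)" if "(Suc i, j) \<in> cells (remove_corner lam r)" for i j
    using that T cells' corner_cell_not_above[OF r, of i j] by (auto simp: SYT_def)
  ultimately show ?thesis
    unfolding SYT_def by blast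
qed

lemma SYT_eq_Union_extend:
  assumes "sorted_wrt (\<ge>) lam" "0 < sum_list lam"
  shows "SYT lam = (\<Union>r\<in>{r. corner lam r}.
    (\<lambda>T'. T'(corner_cell lam r := sum_list lam)) ` SYT (remove_corner lam r))"
proof (intro equalityI subsetI)
  fix T assume T: "T \<in> SYT lam"
  then obtain r where r: "corner lam r" "T (corner_cell lam r) = sum_list lam"
    using SYT_max_at_corner assms(2) by blast
  then have "T = (T(corner_cell lam r := 0))(corner_cell lam r := sum_list lam)"
    by (simp add: fun_upd_idem)
  with r SYT_remove_max[OF T r(1,2)] show "T \<in> (\<Union>r\<in>{r. corner lam r}.
      (\<lambda>T'. T'(corner_cell lam r := sum_list lam)) ` SYT (remove_corner lam r))"
    by blast
qed (use SYT_extend[OF assms(1)] in auto)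


lemma reading_word_extend:
  assumes r: "corner lam r"
  obtains P S where "reading_word lam (T'(corner_cell lam r := k)) = P @ k # S"
    "reading_word (remove_corner lam r) T' = P @ S" "length S = sum_list (drop (Suc r) lam)"
proof -
  let ?n = "length lam" and ?l = "remove_corner lam r" and ?T = "T'(corner_cell lam r := k)"
  define row where "row mu U = (\<lambda>i. map (\<lambda>j. U (i, j)) [0..<mu ! i])"
    for mu :: "nat list" and U :: "nat \<times> nat \<Rightarrow> nat"
  have "r < ?n" "0 < lam ! r"
    using r by (auto simp: corner_def)
  have "[0..<?n] = [0..<r] @ [r..<?n]"
    using upt_add_eq_append[of 0 r "?n - r"] \<open>r < ?n\<close> by simp
  then have split: "[0..<?n] = [0..<r] @ r # [Suc r..<?n]"
    using upt_conv_Cons[of r ?n] \<open>r < ?n\<close> by simp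
  have rw: "reading_word mu U
      = concat (map (row mu U) [0..<r]) @ row mu U r @ concat (map (row mu U) [Suc r..<?n])"
    if "length mu = ?n" for mu U
    using that split by (simp add: reading_word_def row_def)
  have other: "map (row lam ?T) [a..<b] = map (row ?l T') [a..<b]" if "r \<notin> {a..<b}" for a b
    using that by (intro map_cong) (auto simp: row_def remove_corner_def corner_cell_def)
  have "[0..<lam ! r] = [0..<lam ! r - 1] @ [lam ! r - 1]"
    using \<open>0 < lam ! r\<close> by (cases "lam ! r") simp_all
  then have last: "row lam ?T r = row ?l T' r @ [k]"
    using \<open>r < ?n\<close> by (simp add: row_def remove_corner_def corner_cell_def)
  define P where "P = concat (map (row ?l T') [0..<r]) @ row ?l T' r"
  define S where "S = concat (map (row ?l T') [Suc r..<?n])"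
  have "length S = sum_list (map ((!) ?l) [Suc r..<?n])"
    by (simp add: S_def row_def length_concat comp_def)
  also have "map ((!) ?l) [Suc r..<?n] = map ((!) lam) [Suc r..<?n]"
    by (intro map_cong) (auto simp: remove_corner_def)
  also have "map ((!) lam) [Suc r..<?n] = drop (Suc r) lam"
    by (rule nth_equalityI) auto
  finally have "length S = sum_list (drop (Suc r) lam)" .
  moreover have "reading_word lam ?T = P @ k # S"
    using rw[of lam ?T] other[of 0 r] other[of "Suc r" ?n] last by (simp add: P_def S_def)
  moreover have "reading_word ?l T' = P @ S"
    using rw[of ?l T'] by (simp add: P_def S_def remove_corner_def)
  ultimately show ?thesis
    using that by blast
qed

lemma tableau_sign_extend:
  assumes r: "corner lam r" and T': "T' \<in> SYT (remove_corner lam r)"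
  shows "tableau_sign lam (T'(corner_cell lam r := sum_list lam))
       = (-1) ^ sum_list (drop (Suc r) lam) * tableau_sign (remove_corner lam r) T'"
proof -
  obtain P S where PS: "reading_word lam (T'(corner_cell lam r := sum_list lam)) = P @ sum_list lam # S"
    "reading_word (remove_corner lam r) T' = P @ S" "length S = sum_list (drop (Suc r) lam)"
    using reading_word_extend[OF r] .
  have "0 < sum_list lam"
    using r elem_le_sum_list[of r lam] by (simp add: corner_def)
  then have "distinct (P @ S)" "set (P @ S) = {1..length (P @ S)}" "sum_list lam = Suc (length (P @ S))"
    using reading_word_SYT[OF T'] PS(2) sum_list_remove_corner[OF r] by auto
  then show ?thesis
    using sign_word_perm_insert_max[of P S] PS by (simp add: tableau_sign_def)
qed

lemma extend_SYT_disjoint: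
  assumes srt: "sorted_wrt (\<ge>) lam" and "corner lam i" "corner lam j" "i \<noteq> j"
  shows "(\<lambda>T'. T'(corner_cell lam i := sum_list lam)) ` SYT (remove_corner lam i)
    \<inter> (\<lambda>T'. T'(corner_cell lam j := sum_list lam)) ` SYT (remove_corner lam j) = {}"
proof (rule ccontr)
  assume "(\<lambda>T'. T'(corner_cell lam i := sum_list lam)) ` SYT (remove_corner lam i)
    \<inter> (\<lambda>T'. T'(corner_cell lam j := sum_list lam)) ` SYT (remove_corner lam j) \<noteq> {}"
  then obtain T where Ti: "T \<in> (\<lambda>T'. T'(corner_cell lam i := sum_list lam)) ` SYT (remove_corner lam i)"
    and Tj: "T \<in> (\<lambda>T'. T'(corner_cell lam j := sum_list lam)) ` SYT (remove_corner lam j)"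
    by blast
  have "T \<in> SYT lam"
    using Ti SYT_extend[OF srt \<open>corner lam i\<close>] by blast
  then have inj: "inj_on T (cells lam)"
    by (simp add: SYT_def bij_betw_def)
  have "T (corner_cell lam i) = sum_list lam"
    using Ti by auto
  moreover have "T (corner_cell lam j) = sum_list lam"
    using Tj by auto
  ultimately have "corner_cell lam i = corner_cell lam j"
    using inj_onD[OF inj] corner_cell_in_cells assms(2,3) by simp
  with \<open>i \<noteq> j\<close> show False
    by (simp add: corner_cell_def)
qed

lemma inj_on_extend_SYT:
  assumes "corner lam r"
  shows "inj_on (\<lambda>T'. T'(corner_cell lam r := k)) (SYT (remove_corner lam r))"
proof (rule inj_onI)
  fix T1 T2
  assume T: "T1 \<in> SYT (remove_corner lam r)" "T2 \<in> SYT (remove_corner lam r)"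
    and eq: "T1(corner_cell lam r := k) = T2(corner_cell lam r := k)"
  have "corner_cell lam r \<notin> cells (remove_corner lam r)"
    using assms cells_remove_corner by auto
  show "T1 = T2"
  proof
    fix a
    show "T1 a = T2 a"
      using T \<open>corner_cell lam r \<notin> _\<close> fun_cong[OF eq, of a]
      by (cases "a = corner_cell lam r") (simp_all add: SYT_def corner_cell_def)
  qed
qed

lemma sign_imbalance_rec:
  assumes srt: "sorted_wrt (\<ge>) lam" and "0 < sum_list lam"
  shows "sign_imbalance lam = (\<Sum>r<length lam. if corner lam r
    then (-1) ^ sum_list (drop (Suc r) lam) * sign_imbalance (remove_corner lam r) else 0)"
proof -
  let ?ext = "\<lambda>r T'. T'(corner_cell lam r := sum_list lam)" and ?C = "{r. corner lam r}"
  have "finite ?C"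
    by (rule finite_subset[of _ "{..<length lam}"]) (auto simp: corner_def)
  then have "sign_imbalance lam = (\<Sum>r\<in>?C. \<Sum>T\<in>?ext r ` SYT (remove_corner lam r). tableau_sign lam T)"
    unfolding sign_imbalance_def SYT_eq_Union_extend[OF assms]
    by (rule sum.UNION_disjoint) (simp_all add: finite_SYT extend_SYT_disjoint[OF srt])
  also have "\<dots> = (\<Sum>r\<in>?C. (-1) ^ sum_list (drop (Suc r) lam) * sign_imbalance (remove_corner lam r))"
  proof (intro sum.cong refl)
    fix r assume r: "r \<in> ?C"
    have "(\<Sum>T\<in>?ext r ` SYT (remove_corner lam r). tableau_sign lam T)
        = (\<Sum>T'\<in>SYT (remove_corner lam r). tableau_sign lam (?ext r T'))"
      using sum.reindex[OF inj_on_extend_SYT, of lam r] r by (simp add: comp_def)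
    also have "\<dots> = (-1) ^ sum_list (drop (Suc r) lam) * sign_imbalance (remove_corner lam r)"
      using r by (simp add: tableau_sign_extend sign_imbalance_def sum_distrib_left)
    finally show "(\<Sum>T\<in>?ext r ` SYT (remove_corner lam r). tableau_sign lam T)
        = (-1) ^ sum_list (drop (Suc r) lam) * sign_imbalance (remove_corner lam r)" .
  qed
  also have "\<dots> = (\<Sum>r<length lam. if corner lam r
      then (-1) ^ sum_list (drop (Suc r) lam) * sign_imbalance (remove_corner lam r) else 0)"
  proof -
    have "?C = {r \<in> {..<length lam}. corner lam r}"
      by (auto simp: corner_def)
    then show ?thesis
      by (simp only:) (rule sum.inter_filter, simp)
  qed
  finally show ?thesis .
qed

lemma sign_imbalance_sum_list_0:
  assumes "sum_list lam = 0"
  shows "sign_imbalance lam = 1"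
proof -
  have zero: "\<forall>i<length lam. lam ! i = 0"
    using assms by (simp add: sum_list_eq_0_iff)
  then have "cells lam = {}"
    by (auto simp: cells_def)
  then have "SYT lam = {\<lambda>_. 0}"
    using assms by (auto simp: SYT_def bij_betw_def)
  moreover have "reading_word lam (\<lambda>_. 0) = []"
    using zero by (auto simp: reading_word_def)
  moreover have "word_perm [] = id"
    by (auto simp: word_perm_def)
  ultimately show ?thesis
    by (simp add: sign_imbalance_def tableau_sign_def sign_id)
qed

lemma sign_imbalance_append_zeros: "sign_imbalance (lam @ replicate k 0) = sign_imbalance lam"
proof -
  let ?l = "lam @ replicate k 0"
  have "cells ?l = cells lam"
    by (auto simp: cells_def nth_append split: if_splits)
  then have "SYT ?l = SYT lam"
    by (simp add: SYT_def sum_list_replicate)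
  moreover have "reading_word ?l T = reading_word lam T" for T
  proof -
    have split: "[0..<length ?l] = [0..<length lam] @ [length lam..<length lam + k]"
      using upt_add_eq_append[of 0 "length lam" k] by simp
    have rows: "map (\<lambda>i. map (\<lambda>j. T (i, j)) [0..<?l ! i]) [0..<length lam]
        = map (\<lambda>i. map (\<lambda>j. T (i, j)) [0..<lam ! i]) [0..<length lam]"
      by (intro map_cong) (auto simp: nth_append)
    have zeros: "map (\<lambda>i. map (\<lambda>j. T (i, j)) [0..<?l ! i]) [length lam..<length lam + k]
        = map (\<lambda>i. []) [length lam..<length lam + k]"
      by (intro map_cong) (auto simp: nth_append)
    show ?thesis
      unfolding reading_word_def split map_append concat_append rows zeros by simp
  qed
  ultimately show ?thesis
    by (simp add: sign_imbalance_def tableau_sign_def)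
qed

definition fsign_imbalance :: "nat \<Rightarrow> (nat \<Rightarrow> nat) \<Rightarrow> int" where
  "fsign_imbalance K p = sign_imbalance (map p [0..<K])"

lemma fsign_imbalance_rec:
  assumes p: "p \<in> fpartitions (Suc n)" and "Suc n \<le> K"
  shows "fsign_imbalance K p
       = (\<Sum>r<K. if removable p r then sign_below K p r * fsign_imbalance K (remove_cell p r) else 0)"
proof -
  let ?l = "map p [0..<K]"
  have srt: "sorted_wrt (\<ge>) ?l"
    unfolding sorted_wrt_iff_nth_less using fpartitions_antimono[OF p] by auto
  have "sum_list ?l = Suc n"
    using fpartitions_sum[OF p \<open>Suc n \<le> K\<close>]
    by (simp add: sum_set_upt_conv_sum_list_nat[symmetric] atLeast0LessThan)
  then have "fsign_imbalance K p = (\<Sum>r<K. if corner ?l r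
      then (-1) ^ sum_list (drop (Suc r) ?l) * sign_imbalance (remove_corner ?l r) else 0)"
    unfolding fsign_imbalance_def using sign_imbalance_rec[OF srt] by simp
  also have "\<dots> = (\<Sum>r<K. if removable p r then sign_below K p r * fsign_imbalance K (remove_cell p r) else 0)"
  proof (intro sum.cong refl)
    fix r assume "r \<in> {..<K}"
    have "corner ?l r \<longleftrightarrow> removable p r"
    proof (cases "Suc r < K")
      case False
      with \<open>r \<in> {..<K}\<close> have "Suc r = K"
        by simp
      then show ?thesis
        using fpartitions_zero[OF p] \<open>Suc n \<le> K\<close> by (auto simp: corner_def removable_def)
    qed (use \<open>r \<in> {..<K}\<close> in \<open>auto simp: corner_def removable_def\<close>)
    moreover have "(-1::int) ^ sum_list (drop (Suc r) ?l) = sign_below K p r"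
      by (simp add: sign_below_def drop_map sum_set_upt_conv_sum_list_nat[symmetric])
    moreover have "remove_corner ?l r = map (remove_cell p r) [0..<K]"
      by (rule nth_equalityI) (auto simp: remove_corner_def remove_cell_def nth_list_update)
    ultimately show "(if corner ?l r then (-1) ^ sum_list (drop (Suc r) ?l) * sign_imbalance (remove_corner ?l r) else 0)
        = (if removable p r then sign_below K p r * fsign_imbalance K (remove_cell p r) else 0)"
      by (simp add: fsign_imbalance_def)
  qed
  finally show ?thesis .
qed

lemma fsign_imbalance_empty: "fsign_imbalance K (\<lambda>_. 0) = 1"
  by (simp add: fsign_imbalance_def sign_imbalance_sum_list_0 sum_list_eq_0_iff)

lemma weighted_corner_recursion_fsign_imbalance:
  "weighted_corner_recursion K (fsign_imbalance K)"
  by unfold_locales (use fsign_imbalance_rec fsign_imbalance_empty in blast)+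

section \<open>From lists to functions\<close>

definition fpartition_of :: "nat list \<Rightarrow> nat \<Rightarrow> nat" where
  "fpartition_of lam i = (if i < length lam then lam ! i else 0)"

lemma length_le_sum_list: "\<forall>p\<in>set lam. 0 < p \<Longrightarrow> length lam \<le> sum_list (lam :: nat list)"
  by (induction lam) auto

lemma partitionsD:
  assumes "lam \<in> partitions m"
  shows "sorted_wrt (\<ge>) lam" "\<forall>p\<in>set lam. 0 < p" "sum_list lam = m" "length lam \<le> m"
  using assms length_le_sum_list[of lam] by (auto simp: partitions_def is_partition_def)

lemma sum_fpartition_of:
  assumes "length lam \<le> N"
  shows "(\<Sum>i<N. f (fpartition_of lam i) i) = (\<Sum>i<length lam. f (lam ! i) i) + (\<Sum>i = length lam..<N. f 0 i)"
proof -
  have "(\<Sum>i<N. f (fpartition_of lam i) i)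
      = (\<Sum>i<length lam. f (fpartition_of lam i) i) + (\<Sum>i = length lam..<N. f (fpartition_of lam i) i)"
    using assms by (metis sum.atLeastLessThan_concat lessThan_atLeast0 zero_le)
  then show ?thesis
    by (simp add: fpartition_of_def)
qed

lemma fpartition_of_partitions:
  assumes lam: "lam \<in> partitions m"
  shows "fpartition_of lam \<in> fpartitions m"
proof -
  have "antimono (fpartition_of lam)"
    unfolding antimono_iff_le_Suc fpartition_of_def
    using sorted_wrt_nth_less[OF partitionsD(1)[OF lam]] by auto
  moreover have "(\<Sum>i<m. fpartition_of lam i) = m"
    using sum_fpartition_of[of lam m "\<lambda>p _. p"] partitionsD[OF lam]
    by (simp add: sum_list_sum_nth atLeast0LessThan)
  ultimately show ?thesis
    using partitionsD(4)[OF lam] by (simp add: fpartitions_def fpartition_of_def)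
qed

lemma map_fpartition_of:
  "lam \<in> partitions m \<Longrightarrow> map (fpartition_of lam) [0..<m] = lam @ replicate (m - length lam) 0"
  using partitionsD(4) by (intro nth_equalityI) (auto simp: fpartition_of_def nth_append)

definition list_of_fpartition :: "nat \<Rightarrow> (nat \<Rightarrow> nat) \<Rightarrow> nat list" where
  "list_of_fpartition m p = takeWhile (\<lambda>k. 0 < k) (map p [0..<m])"

lemma list_of_fpartition_eq:
  assumes p: "p \<in> fpartitions m"
  obtains l where "l \<le> m" "list_of_fpartition m p = map p [0..<l]"
    "\<And>i. i < l \<Longrightarrow> 0 < p i" "\<And>i. l \<le> i \<Longrightarrow> p i = 0"
proof -
  define l where "l = length (list_of_fpartition m p)"
  have "l \<le> m"
    using length_takeWhile_le[of "\<lambda>k. 0 < k" "map p [0..<m]"] by (simp add: l_def list_of_fpartition_def)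
  have "list_of_fpartition m p = take l (map p [0..<m])"
    unfolding l_def list_of_fpartition_def by (rule takeWhile_eq_take)
  then have list: "list_of_fpartition m p = map p [0..<l]"
    using \<open>l \<le> m\<close> by (simp add: take_map)
  have "0 < p i" if "i < l" for i
  proof -
    have "p i \<in> set (list_of_fpartition m p)"
      using that list by simp
    then show ?thesis
      unfolding list_of_fpartition_def by (blast dest: set_takeWhileD)
  qed
  moreover have "p l = 0"
  proof (cases "l < m")
    case True
    then show ?thesis
      using nth_length_takeWhile[of "\<lambda>k. 0 < k" "map p [0..<m]"] by (simp add: l_def list_of_fpartition_def)
  qed (use \<open>l \<le> m\<close> fpartitions_zero[OF p] in auto)
  then have "l \<le> i \<Longrightarrow> p i = 0" for i
    using fpartitions_antimono[OF p, of l i] by simp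
  ultimately show ?thesis
    using that \<open>l \<le> m\<close> list by blast
qed

lemma fpartition_of_list_of_fpartition:
  assumes p: "p \<in> fpartitions m"
  shows "fpartition_of (list_of_fpartition m p) = p"
proof -
  obtain l where "list_of_fpartition m p = map p [0..<l]" "\<And>i. l \<le> i \<Longrightarrow> p i = 0"
    using list_of_fpartition_eq[OF p] by blast
  then show ?thesis
    by (auto simp: fun_eq_iff fpartition_of_def)
qed

lemma list_of_fpartition_partitions:
  assumes p: "p \<in> fpartitions m"
  shows "list_of_fpartition m p \<in> partitions m"
proof -
  obtain l where l: "l \<le> m" "list_of_fpartition m p = map p [0..<l]" "\<And>i. i < l \<Longrightarrow> 0 < p i"
    "\<And>i. l \<le> i \<Longrightarrow> p i = 0"
    using list_of_fpartition_eq[OF p] by blast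
  have "sorted_wrt (\<ge>) (list_of_fpartition m p)"
    unfolding l(2) sorted_wrt_iff_nth_less using fpartitions_antimono[OF p] by auto
  moreover have "(\<Sum>i<m. p i) = (\<Sum>i<l. p i) + (\<Sum>i = l..<m. p i)"
    using l(1) by (metis sum.atLeastLessThan_concat lessThan_atLeast0 zero_le)
  then have "sum_list (list_of_fpartition m p) = m"
    using fpartitions_sum[OF p, of m] l(2,4)
    by (simp add: sum_set_upt_conv_sum_list_nat[symmetric] atLeast0LessThan)
  ultimately show ?thesis
    using l(2,3) by (auto simp: partitions_def is_partition_def in_set_conv_nth)
qed

lemma list_of_fpartition_fpartition_of:
  "lam \<in> partitions m \<Longrightarrow> list_of_fpartition m (fpartition_of lam) = lam"
  using partitionsD(2) by (simp add: list_of_fpartition_def map_fpartition_of takeWhile_append)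

lemma bij_betw_fpartition_of: "bij_betw fpartition_of (partitions m) (fpartitions m)"
  by (rule bij_betw_byWitness[where f' = "list_of_fpartition m"])
    (auto simp: fpartition_of_partitions list_of_fpartition_fpartition_of fpartition_of_list_of_fpartition
      list_of_fpartition_partitions)

section \<open>The statistics as row sums\<close>

lemma less_nth_iff_less_length_filter:
  assumes "sorted_wrt (\<ge>) (lam :: nat list)" "i < length lam"
  shows "j < lam ! i \<longleftrightarrow> i < length (filter (\<lambda>p. j < p) lam)"
  using assms
proof (induction lam arbitrary: i)
  case (Cons a lam)
  have "filter (\<lambda>p. j < p) lam = []" if "\<not> j < a"
    using Cons.prems(1) that by (auto simp: filter_empty_conv)
  moreover have "\<not> j < lam ! i'" if "\<not> j < a" "i' < length lam" for i'
  proof -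
    have "lam ! i' \<le> a"
      using Cons.prems(1) nth_mem[OF that(2)] by simp
    with that(1) show ?thesis
      by simp
  qed
  ultimately show ?case
    using Cons by (cases i) auto
qed simp

lemma card_odd_lessThan: "card {i. i < c \<and> odd i} = c div 2"
proof (induction c)
  case (Suc c)
  show ?case
  proof (cases "odd c")
    case True
    then have "{i. i < Suc c \<and> odd i} = insert c {i. i < c \<and> odd i}"
      by (auto simp: less_Suc_eq)
    with True Suc show ?thesis
      by (simp; presburger)
  next
    case False
    then have "{i. i < Suc c \<and> odd i} = {i. i < c \<and> odd i}"
      by (auto simp: less_Suc_eq)
    with False Suc show ?thesis
      by (simp; presburger)
  qed
qed simp

lemma length_filter_less_div_2:
  assumes "sorted_wrt (\<ge>) (lam :: nat list)"
  shows "length (filter (\<lambda>p. j < p) lam) div 2 = card {i. i < length lam \<and> odd i \<and> j < lam ! i}"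
proof -
  have "i < length (filter (\<lambda>p. j < p) lam) \<Longrightarrow> i < length lam" for i
    using length_filter_le[of "\<lambda>p. j < p" lam] by linarith
  then have "{i. i < length lam \<and> odd i \<and> j < lam ! i} = {i. i < length (filter (\<lambda>p. j < p) lam) \<and> odd i}"
    using less_nth_iff_less_length_filter[OF assms] by blast
  then show ?thesis
    by (simp add: card_odd_lessThan)
qed

lemma conj_part_nth: "lam \<noteq> [] \<Longrightarrow> j < hd lam \<Longrightarrow> conj_part lam ! j = length (filter (\<lambda>p. j < p) lam)"
  by (simp add: conj_part_def)

lemma length_conj_part: "length (conj_part lam) = (if lam = [] then 0 else hd lam)"
  by (simp add: conj_part_def)

lemma nth_le_hd: "sorted_wrt (\<ge>) (lam :: nat list) \<Longrightarrow> i < length lam \<Longrightarrow> lam ! i \<le> hd lam"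
  using sorted_wrt_nth_less[of "(\<ge>)" lam 0 i] by (cases lam; cases i) auto

lemma card_conv_sum: "card {i. i < (N::nat) \<and> P i} = (\<Sum>i<N. if P i then 1 else 0)"
  by (simp add: sum.If_cases lessThan_def Collect_conj_eq Int_commute)

text \<open>Both \<open>v(\<lambda>')\<close> and \<open>d(\<lambda>')\<close> count the cells of \<open>\<lambda>\<close> by columns; regrouping by rows,
  only the odd rows (0-indexed) contribute.\<close>

lemma v_stat_conj_part:
  assumes srt: "sorted_wrt (\<ge>) (lam :: nat list)"
  shows "v_stat (conj_part lam) = (\<Sum>i<length lam. if odd i then lam ! i else 0)"
proof (cases "lam = []")
  case False
  let ?h = "hd lam" and ?n = "length lam"
  have "v_stat (conj_part lam) = (\<Sum>j<?h. \<Sum>i<?n. if odd i \<and> j < lam ! i then 1 else 0)"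
    using False by (simp add: v_stat_def length_conj_part conj_part_nth length_filter_less_div_2[OF srt]
        card_conv_sum)
  also have "\<dots> = (\<Sum>i<?n. \<Sum>j<?h. if odd i \<and> j < lam ! i then 1 else 0)"
    by (rule sum.swap)
  also have "\<dots> = (\<Sum>i<?n. if odd i then lam ! i else 0)"
  proof (intro sum.cong refl)
    fix i assume "i \<in> {..<?n}"
    then have "{j. j < ?h \<and> odd i \<and> j < lam ! i} = (if odd i then {..<lam ! i} else {})"
      using nth_le_hd[OF srt, of i] by auto
    then show "(\<Sum>j<?h. if odd i \<and> j < lam ! i then 1 else 0) = (if odd i then lam ! i else 0)"
      by (simp flip: card_conv_sum)
  qed
  finally show ?thesis .
qed (simp add: v_stat_def conj_part_def)

lemma d_stat_conj_part:
  assumes srt: "sorted_wrt (\<ge>) (lam :: nat list)"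
  shows "d_stat (conj_part lam) = (\<Sum>i<length lam. if odd i then lam ! i div 2 else 0)"
proof (cases "lam = []")
  case False
  let ?h = "hd lam" and ?n = "length lam"
  have "d_stat (conj_part lam) = (\<Sum>k\<in>{1..?h div 2}. \<Sum>i<?n. if odd i \<and> 2 * k - 1 < lam ! i then 1 else 0)"
    using False unfolding d_stat_def length_conj_part
    by (intro sum.cong refl) (auto simp: conj_part_nth length_filter_less_div_2[OF srt] card_conv_sum)
  also have "\<dots> = (\<Sum>i<?n. \<Sum>k\<in>{1..?h div 2}. if odd i \<and> 2 * k - 1 < lam ! i then 1 else 0)"
    by (rule sum.swap)
  also have "\<dots> = (\<Sum>i<?n. if odd i then lam ! i div 2 else 0)"
  proof (intro sum.cong refl)
    fix i assume "i \<in> {..<?n}"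
    then have "{k \<in> {1..?h div 2}. odd i \<and> 2 * k - 1 < lam ! i} = (if odd i then {1..lam ! i div 2} else {})"
      using nth_le_hd[OF srt, of i] by auto
    then show "(\<Sum>k\<in>{1..?h div 2}. if odd i \<and> 2 * k - 1 < lam ! i then 1 else 0)
        = (if odd i then lam ! i div 2 else 0)"
      by (simp add: sum.inter_filter[symmetric])
  qed
  finally show ?thesis .
qed (simp add: d_stat_def conj_part_def)

lemma d_stat_eq: "d_stat lam = (\<Sum>i<length lam. if odd i then lam ! i div 2 else 0)"
proof -
  have "(\<Sum>i<length lam. if odd i then lam ! i div 2 else 0) = (\<Sum>i\<in>{i \<in> {..<length lam}. odd i}. lam ! i div 2)"
    by (rule sum.inter_filter[symmetric]) simp
  also have "\<dots> = (\<Sum>k\<in>{1..length lam div 2}. lam ! (2 * k - 1) div 2)"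
    by (rule sum.reindex_bij_witness[where i = "\<lambda>k. 2 * k - 1" and j = "\<lambda>i. (i + 1) div 2"])
      (auto elim!: oddE)
  finally show ?thesis
    by (simp add: d_stat_def)
qed

lemma (in row_weights) weight_fpartition_of:
  assumes lam: "lam \<in> partitions K"
  shows "weight (fpartition_of lam)
       = x ^ v_stat lam * y ^ v_stat (conj_part lam) * q ^ d_stat lam * t ^ d_stat (conj_part lam)"
proof -
  have "row_weight i n = x ^ (n div 2) * y ^ (if odd i then n else 0) * q ^ (if odd i then n div 2 else 0)
      * t ^ (if odd i then n div 2 else 0)" for i n
    by (simp add: row_weight_def)
  then have "weight (fpartition_of lam)
      = x ^ (\<Sum>i<K. fpartition_of lam i div 2) * y ^ (\<Sum>i<K. if odd i then fpartition_of lam i else 0)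
      * q ^ (\<Sum>i<K. if odd i then fpartition_of lam i div 2 else 0)
      * t ^ (\<Sum>i<K. if odd i then fpartition_of lam i div 2 else 0)"
    by (simp add: weight_def prod.distrib power_sum)
  moreover have "(\<Sum>i<K. fpartition_of lam i div 2) = v_stat lam"
    using sum_fpartition_of[of lam K "\<lambda>p _. p div 2"] partitionsD(4)[OF lam] by (simp add: v_stat_def)
  moreover have "(\<Sum>i<K. if odd i then fpartition_of lam i else 0) = v_stat (conj_part lam)"
    using sum_fpartition_of[of lam K "\<lambda>p i. if odd i then p else 0"] partitionsD[OF lam]
    by (simp add: v_stat_conj_part)
  moreover have "(\<Sum>i<K. if odd i then fpartition_of lam i div 2 else 0) = d_stat lam"
    using sum_fpartition_of[of lam K "\<lambda>p i. if odd i then p div 2 else 0"] partitionsD(4)[OF lam]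
    by (simp add: d_stat_eq)
  moreover have "d_stat (conj_part lam) = d_stat lam"
    using d_stat_conj_part[OF partitionsD(1)[OF lam]] d_stat_eq[of lam] by simp
  ultimately show ?thesis
    by simp
qed

theorem theorem4p5:
  fixes m :: nat and x y q t :: "'a :: comm_ring_1"
  assumes "m \<ge> 1"
  shows "(\<Sum>lam\<in>partitions m.
            x ^ v_stat lam * y ^ v_stat (conj_part lam) * q ^ d_stat lam * t ^ d_stat (conj_part lam)
            * of_int (sign_imbalance lam)) = (x + y) ^ (m div 2)"
proof -
  interpret weighted_corner_recursion m "fsign_imbalance m" x y q t
    by (rule weighted_corner_recursion_fsign_imbalance)
  have "(\<Sum>lam\<in>partitions m.
            x ^ v_stat lam * y ^ v_stat (conj_part lam) * q ^ d_stat lam * t ^ d_stat (conj_part lam)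
            * of_int (sign_imbalance lam))
      = (\<Sum>lam\<in>partitions m. weight (fpartition_of lam) * of_int (fsign_imbalance m (fpartition_of lam)))"
    by (intro sum.cong refl)
      (simp add: weight_fpartition_of fsign_imbalance_def map_fpartition_of sign_imbalance_append_zeros)
  also have "\<dots> = weighted_sum m"
    unfolding weighted_sum_def by (rule sum.reindex_bij_betw[OF bij_betw_fpartition_of])
  also have "\<dots> = (x + y) ^ (m div 2)"
    by (rule weighted_sum_eq) simp
  finally show ?thesis .
qed

end
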